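(* Let $g_0,g_1,b,T$ and the mild skew product $G$ with fibre maps $f_\omega$ be as in the context, with $\delta>0$ sufficiently small. Let $\alpha=\alpha_{-n}\ldots\alpha_{n-1}$ be a word and $\phi_1\ne\phi_2$ points of $S^1$. Then there exists a word $\bar\beta=\beta_{-m}\ldots\beta_{-n-1}\alpha_{-n}\ldots\alpha_{n-1}\beta_n\ldots\beta_{m-1}$ such that the words $\beta_{-m}\ldots\beta_{-n-1}$ and $\beta_n\ldots\beta_{m-1}$ cannot contain fewer than $T$ zeros in a row (every maximal block of consecutive zeros in them has length at least $T$), and $d_{S^1}(V_+[\bar\beta](\phi_1),V_+[\bar\beta](\phi_2))\ge2b$ and $d_{S^1}(V_-[\bar\beta](\phi_1),V_-[\bar\beta](\phi_2))\ge2b$.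
   Context: $S^1=\mathbb R/\mathbb Z$; $\Sigma^2$ is the space of two-sided $0$-$1$ sequences with shift $\sigma$. $g_0$ is the rotation by $b<1/100$; $g_1$ is an orientation-preserving circle diffeomorphism with exactly two nonwandering points, an attractor $1/2$ and a repeller $0$, linear expanding with constant $a>1$ on the $1/8$-neighborhood of $0$ and linear contracting with constant $1/a$ on the $1/8$-neighborhood of $1/2$. $T$ is a fixed positive integer. $G(\omega,\phi)=(\sigma(\omega),f_\omega(\phi))$ is a mild skew product with $f_\omega$ in the $C^1$ $\delta$-ball around $g_{\omega_0}$ ($\omega_0$ the symbol at position $0$), satisfying $\max_{\omega,\phi}\max(\|Df_\omega(\phi)\|,\|Df^{-1}_\omega(\phi)\|)<2^{\alpha}$ and $d_{C^0}(f_\omega,f_{\omega'})\le C d_{\Sigma^2}(\omega,\omega')^{\alpha}$ for fixed constants $C,\alpha$. Notation: $\bar f_m[\omega]=f_{\sigma^{m-1}(\omega)}\circ\cdots\circ f_\omega$, $\bar f_{-m}[\omega]=f^{-1}_{\sigma^{-m}(\omega)}\circ\cdots\circ f^{-1}_{\sigma^{-1}(\omega)}$. For a word $\bar\beta=\beta_{-m}\ldots\beta_{m-1}$, $C_{\bar\beta}$ is the set of $\omega\in\Sigma^2$ whose symbols at positions $-m,\ldots,m-1$ are $\beta_{-m},\ldots,\beta_{m-1}$, and $V_\pm[\bar\beta](\phi)=\{\bar f_{\pm m}[\omega](\phi):\omega\in C_{\bar\beta}\}$. The distance $d_{S^1}$ between two subsets of the circle is the length of the shortest arc connecting a point of one to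 a point of the other. *)

theory Defs
  imports "HOL-Analysis.Analysis"
begin

text \<open>The circle S^1 = R/Z: points are represented by real numbers (modulo 1);
  circle maps are represented by their lifts R -> R.\<close>

definition circ_dist :: "real \<Rightarrow> real \<Rightarrow> real" where
  "circ_dist x y = min (frac (x - y)) (1 - frac (x - y))"

definition set_circ_dist :: "real set \<Rightarrow> real set \<Rightarrow> real" where
  "set_circ_dist A B = Inf {circ_dist x y | x y. x \<in> A \<and> y \<in> B}"

definition circle_diffeo :: "(real \<Rightarrow> real) \<Rightarrow> bool" where
  "circle_diffeo F \<longleftrightarrow> (\<forall>x. F (x + 1) = F x + 1)
     \<and> (\<forall>x. (F has_real_derivative deriv F x) (at x))
     \<and> continuous_on UNIV (deriv F)
     \<and> (\<forall>x. deriv F x > 0)"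

definition nonwandering :: "(real \<Rightarrow> real) \<Rightarrow> real \<Rightarrow> bool" where
  "nonwandering F x \<longleftrightarrow> (\<forall>\<epsilon>>0. \<exists>n\<ge>1. \<exists>y.
      circ_dist y x < \<epsilon> \<and> circ_dist ((F ^^ n) y) x < \<epsilon>)"

definition C1_close :: "real \<Rightarrow> (real \<Rightarrow> real) \<Rightarrow> (real \<Rightarrow> real) \<Rightarrow> bool" where
  "C1_close \<delta> F G \<longleftrightarrow>
     (SUP x. circ_dist (F x) (G x)) < \<delta> \<and> (SUP x. \<bar>deriv F x - deriv G x\<bar>) < \<delta>"

definition Sigma2 :: "(int \<Rightarrow> nat) set" where
  "Sigma2 = {\<omega>. \<forall>i. \<omega> i \<le> 1}"

definition shift :: "int \<Rightarrow> (int \<Rightarrow> nat) \<Rightarrow> (int \<Rightarrow> nat)" where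
  "shift k \<omega> = (\<lambda>i. \<omega> (i + k))"

definition dSigma :: "(int \<Rightarrow> nat) \<Rightarrow> (int \<Rightarrow> nat) \<Rightarrow> real" where
  "dSigma \<omega> \<omega>' = (if \<omega> = \<omega>' then 0
     else 2 powr (- real (LEAST k::nat. \<exists>i. \<bar>i\<bar> = int k \<and> \<omega> i \<noteq> \<omega>' i)))"

fun fwd :: "((int \<Rightarrow> nat) \<Rightarrow> real \<Rightarrow> real) \<Rightarrow> nat \<Rightarrow> (int \<Rightarrow> nat) \<Rightarrow> real \<Rightarrow> real" where
  "fwd f 0 \<omega> = id"
| "fwd f (Suc m) \<omega> = fwd f m (shift 1 \<omega>) \<circ> f \<omega>"

fun bwd :: "((int \<Rightarrow> nat) \<Rightarrow> real \<Rightarrow> real) \<Rightarrow> nat \<Rightarrow> (int \<Rightarrow> nat) \<Rightarrow> real \<Rightarrow> real" where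
  "bwd f 0 \<omega> = id"
| "bwd f (Suc m) \<omega> = bwd f m (shift (-1) \<omega>) \<circ> inv (f (shift (-1) \<omega>))"

text \<open>Cylinder of a word \<open>\<beta>_{-m} ... \<beta>_{m-1}\<close> (word given as a function on Z,
  only the positions -m..m-1 matter).\<close>
definition cylinder :: "nat \<Rightarrow> (int \<Rightarrow> nat) \<Rightarrow> (int \<Rightarrow> nat) set" where
  "cylinder m \<beta> = {\<omega> \<in> Sigma2. \<forall>i. - int m \<le> i \<and> i < int m \<longrightarrow> \<omega> i = \<beta> i}"

definition Vplus :: "((int \<Rightarrow> nat) \<Rightarrow> real \<Rightarrow> real) \<Rightarrow> nat \<Rightarrow> (int \<Rightarrow> nat) \<Rightarrow> real \<Rightarrow> real set" where
  "Vplus f m \<beta> \<phi> = {fwd f m \<omega> \<phi> | \<omega>. \<omega> \<in> cylinder m \<beta>}"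

definition Vminus :: "((int \<Rightarrow> nat) \<Rightarrow> real \<Rightarrow> real) \<Rightarrow> nat \<Rightarrow> (int \<Rightarrow> nat) \<Rightarrow> real \<Rightarrow> real set" where
  "Vminus f m \<beta> \<phi> = {bwd f m \<omega> \<phi> | \<omega>. \<omega> \<in> cylinder m \<beta>}"

definition zero_blocks_ge :: "nat \<Rightarrow> (int \<Rightarrow> nat) \<Rightarrow> int \<Rightarrow> int \<Rightarrow> bool" where
  "zero_blocks_ge T w lo hi \<longleftrightarrow>
     (\<forall>i j. lo \<le> i \<and> i \<le> j \<and> j < hi
        \<and> (\<forall>k. i \<le> k \<and> k \<le> j \<longrightarrow> w k = 0)
        \<and> (i = lo \<or> w (i - 1) \<noteq> 0)
        \<and> (j = hi - 1 \<or> w (j + 1) \<noteq> 0)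
        \<longrightarrow> j - i + 1 \<ge> int T)"

definition mild_skew :: "real \<Rightarrow> (real \<Rightarrow> real) \<Rightarrow> real \<Rightarrow> real \<Rightarrow> real
    \<Rightarrow> ((int \<Rightarrow> nat) \<Rightarrow> real \<Rightarrow> real) \<Rightarrow> bool" where
  "mild_skew b g1 \<delta> C \<alpha> f \<longleftrightarrow>
     (\<forall>\<omega>\<in>Sigma2. circle_diffeo (f \<omega>)
        \<and> C1_close \<delta> (f \<omega>) (if \<omega> 0 = 0 then (\<lambda>x. x + b) else g1))
   \<and> (\<exists>L < 2 powr \<alpha>. \<forall>\<omega>\<in>Sigma2. \<forall>\<phi>.
        \<bar>deriv (f \<omega>) \<phi>\<bar> \<le> L \<and> \<bar>deriv (inv (f \<omega>)) \<phi>\<bar> \<le> L)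
   \<and> (\<forall>\<omega>\<in>Sigma2. \<forall>\<omega>'\<in>Sigma2. \<forall>x.
        circ_dist (f \<omega> x) (f \<omega>' x) \<le> C * dSigma \<omega> \<omega>' powr \<alpha>)"

end

theory Submission
  imports Defs
begin

text \<open>The word is built by appending, on both sides of the given central word, cycles of \<open>P\<close>
  symbols, each containing at most one \<open>1\<close> at an offset between \<open>T\<close> and \<open>P - T\<close>. Along
  zeros the fibre maps are almost rotations by \<open>\<plusminus>b\<close> and nearly isometric, while a single \<open>1\<close>
  acts near the repeller \<open>0\<close> (forward) or near the attractor \<open>1/2\<close> (for the inverse maps,
  backward) as an expansion by roughly \<open>a\<close>. Because the rotation is small, the offset of the
  \<open>1\<close> can be chosen so that a reference orbit arrives within \<open>b/2\<close> of the expanding point; if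
  the two orbits are then closer than about \<open>2b\<close> their distance grows by a factor
  \<open>(1 + a)/2 > 1\<close>, and otherwise the cycle is left without a \<open>1\<close>. Hoelder dependence of
  \<open>f\<^sub>\<omega>\<close> on \<open>\<omega>\<close> makes all orbits over a long cylinder \<open>\<epsilon>\<close>-close to the reference
  orbit, so the separation holds uniformly on the cylinder and exceeds \<open>2b + \<epsilon>\<close> after
  finitely many cycles.\<close>

section \<open>Distance on the circle\<close>

lemma circ_dist_le_diff_int: "circ_dist x y \<le> \<bar>x - y - of_int k\<bar>"
proof -
  define d where "d = x - y"
  have fr: "frac d = d - of_int \<lfloor>d\<rfloor>" by (simp add: frac_def)
  have f0: "0 \<le> frac d" "frac d < 1" by (auto simp: frac_lt_1)
  define m where "m = k - \<lfloor>d\<rfloor>"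
  have e: "\<bar>d - of_int k\<bar> = \<bar>frac d - of_int m\<bar>" by (simp add: fr m_def)
  show ?thesis
  proof (cases "m \<le> 0")
    case True
    then have "frac d \<le> \<bar>frac d - of_int m\<bar>" using f0 by simp
    then show ?thesis unfolding circ_dist_def d_def[symmetric] e[symmetric] by simp
  next
    case False
    then have "m \<ge> 1" by simp
    then have "1 - frac d \<le> \<bar>frac d - of_int m\<bar>" using f0 by (simp add: abs_if)
    then show ?thesis unfolding circ_dist_def d_def[symmetric] e[symmetric] by simp
  qed
qed

lemma circ_dist_attained: "\<exists>k::int. circ_dist x y = \<bar>x - y - of_int k\<bar>"
proof -
  define d where "d = x - y"
  have fr: "frac d = d - of_int \<lfloor>d\<rfloor>" by (simp add: frac_def)
  have f0: "0 \<le> frac d" "frac d < 1" by (auto simp: frac_lt_1)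
  show ?thesis
  proof (cases "frac d \<le> 1 - frac d")
    case True
    then have "circ_dist x y = \<bar>d - of_int \<lfloor>d\<rfloor>\<bar>" using f0 fr by (simp add: circ_dist_def d_def[symmetric])
    then show ?thesis unfolding d_def by blast
  next
    case False
    then have "circ_dist x y = \<bar>d - of_int (\<lfloor>d\<rfloor>+1)\<bar>" using f0 fr by (simp add: circ_dist_def d_def[symmetric])
    then show ?thesis unfolding d_def by blast
  qed
qed

lemma circ_dist_nonneg: "0 \<le> circ_dist x y"
  by (simp add: circ_dist_def frac_lt_1 less_imp_le)

lemma circ_dist_le_half: "circ_dist x y \<le> 1/2"
  unfolding circ_dist_def by linarith

lemma circ_dist_le_abs: "circ_dist x y \<le> \<bar>x - y\<bar>"
  using circ_dist_le_diff_int[of x y 0] by simp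

lemma circ_dist_commute: "circ_dist x y = circ_dist y x"
proof -
  have *: "circ_dist x y \<le> circ_dist y x" for x y
  proof -
    obtain k where "circ_dist y x = \<bar>y - x - of_int k\<bar>" using circ_dist_attained by blast
    moreover have "circ_dist x y \<le> \<bar>x - y - of_int (-k)\<bar>" by (rule circ_dist_le_diff_int)
    ultimately show ?thesis by simp
  qed
  show ?thesis using *[of x y] *[of y x] by simp
qed

lemma circ_dist_triangle: "circ_dist x z \<le> circ_dist x y + circ_dist y z"
proof -
  obtain k where k: "circ_dist x y = \<bar>x - y - of_int k\<bar>" using circ_dist_attained by blast
  obtain l where l: "circ_dist y z = \<bar>y - z - of_int l\<bar>" using circ_dist_attained by blast
  have "circ_dist x z \<le> \<bar>x - z - of_int (k + l)\<bar>" by (rule circ_dist_le_diff_int)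
  also have "\<dots> \<le> \<bar>x - y - of_int k\<bar> + \<bar>y - z - of_int l\<bar>" by simp
  finally show ?thesis using k l by simp
qed

lemma circ_dist_perturb:
  assumes "circ_dist x x' \<le> e" "circ_dist y y' \<le> e'"
  shows "circ_dist x y \<le> circ_dist x' y' + e + e'"
  using assms circ_dist_triangle[of x y x'] circ_dist_triangle[of x' y y'] circ_dist_commute[of y' y]
  by linarith

lemma circ_dist_eq_abs: "\<bar>x - y\<bar> \<le> 1/2 \<Longrightarrow> circ_dist x y = \<bar>x - y\<bar>"
proof -
  assume h: "\<bar>x - y\<bar> \<le> 1/2"
  obtain k where k: "circ_dist x y = \<bar>x - y - of_int k\<bar>" using circ_dist_attained by blast
  have "\<bar>x - y\<bar> \<le> \<bar>x - y - of_int k\<bar>"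
  proof (cases "k = 0")
    case False
    then have "\<bar>of_int k::real\<bar> \<ge> 1" by (metis abs_ge_zero add_0 int_less_real_le not_le of_int_0 of_int_abs zero_less_abs_iff)
    then show ?thesis using h by linarith
  qed simp
  then show ?thesis using k circ_dist_le_abs[of x y] by linarith
qed

lemma circ_dist_add_int_left: "circ_dist (x + of_int k) y = circ_dist x y"
proof -
  have a: "circ_dist (x + of_int k) y \<le> circ_dist x y"
  proof -
    obtain l where "circ_dist x y = \<bar>x - y - of_int l\<bar>" using circ_dist_attained by blast
    moreover have "circ_dist (x + of_int k) y \<le> \<bar>x + of_int k - y - of_int (l + k)\<bar>" by (rule circ_dist_le_diff_int)
    ultimately show ?thesis by simp
  qed
  have b: "circ_dist x y \<le> circ_dist (x + of_int k) y"
  proof -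
    obtain l where "circ_dist (x + of_int k) y = \<bar>x + of_int k - y - of_int l\<bar>" using circ_dist_attained by blast
    moreover have "circ_dist x y \<le> \<bar>x - y - of_int (l - k)\<bar>" by (rule circ_dist_le_diff_int)
    ultimately show ?thesis by simp
  qed
  from a b show ?thesis by simp
qed

lemma circ_dist_add_int_right: "circ_dist x (y + of_int k) = circ_dist x y"
  using circ_dist_add_int_left[of y k x] circ_dist_commute[of x "y + of_int k"] circ_dist_commute[of y x] by simp

lemma circ_dist_translate: "circ_dist (x + c) (y + c) = circ_dist x y"
  by (simp add: circ_dist_def)

lemma circ_dist_minus: "circ_dist (- x) (- y) = circ_dist x y"
proof -
  have *: "circ_dist (- x) (- y) \<le> circ_dist x y" for x y
  proof -
    obtain k where "circ_dist x y = \<bar>x - y - of_int k\<bar>" using circ_dist_attained by blast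
    moreover have "circ_dist (- x) (- y) \<le> \<bar>- x - - y - of_int (- k)\<bar>" by (rule circ_dist_le_diff_int)
    ultimately show ?thesis by (simp add: abs_minus_commute)
  qed
  show ?thesis using *[of x y] *[of "-x" "-y"] by simp
qed

lemma circ_dist_self: "circ_dist x x = 0"
  by (simp add: circ_dist_def)

lemma circ_dist_pos: "frac x \<noteq> frac y \<Longrightarrow> 0 < circ_dist x y"
proof (rule ccontr)
  assume h: "frac x \<noteq> frac y" "\<not> 0 < circ_dist x y"
  then have "circ_dist x y = 0" using circ_dist_nonneg[of x y] by simp
  then obtain k where "\<bar>x - y - of_int k\<bar> = 0" using circ_dist_attained by metis
  then have "x = y + of_int k" by simp
  then have "frac x = frac y" by (simp add: frac_def)
  then show False using h by simp
qed

lemma circ_dist_less_int_shift: "circ_dist x c < r \<Longrightarrow> \<exists>k::int. \<bar>x - of_int k - c\<bar> < r"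
proof -
  assume "circ_dist x c < r"
  moreover obtain k where "circ_dist x c = \<bar>x - c - of_int k\<bar>" using circ_dist_attained by blast
  ultimately show ?thesis by (intro exI[of _ k]) (simp add: algebra_simps)
qed

lemma set_circ_dist_ge:
  assumes "S \<noteq> {}" and "\<And>s s'. s \<in> S \<Longrightarrow> s' \<in> S \<Longrightarrow> c \<le> circ_dist (u s) (v s')"
  shows "c \<le> set_circ_dist {u s | s. s \<in> S} {v s | s. s \<in> S}"
  unfolding set_circ_dist_def using assms by (intro cInf_greatest) auto

lemma rotation_multiple_near:
  fixes b d :: real and T :: nat
  assumes b0: "0 < b"
  shows "\<exists>k. T \<le> k \<and> k \<le> T + nat \<lceil>1/b\<rceil> \<and> circ_dist (real k * b) d \<le> b/2"
proof -
  define z where "z = frac (d - real T * b)"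
  have z0: "0 \<le> z" "z < 1" by (auto simp: z_def frac_lt_1)
  define J where "J = \<lfloor>z / b + 1/2\<rfloor>"
  have J0: "0 \<le> J" using z0 b0 by (simp add: J_def)
  have J1: "of_int J \<le> z / b + 1/2" "z / b + 1/2 < of_int J + 1" unfolding J_def
    using of_int_floor_le real_of_int_floor_add_one_gt by blast+
  define j where "j = nat J"
  have jJ: "real j = of_int J" using J0 by (simp add: j_def)
  have "\<bar>real j * b - z\<bar> \<le> b/2"
  proof -
    have "real j - 1/2 \<le> z / b" "z / b \<le> real j + 1/2" using J1 jJ by linarith+
    then have "(real j - 1/2) * b \<le> z" "z \<le> (real j + 1/2) * b" using b0 by (simp_all add: field_simps)
    then have A: "real j * b - z \<le> b/2" "z - real j * b \<le> b/2" by (simp_all add: algebra_simps)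
    then show ?thesis unfolding abs_le_iff by linarith
  qed
  have jK: "j \<le> nat \<lceil>1/b\<rceil>"
  proof -
    have "z / b < 1 / b" using z0 b0 by (simp add: divide_strict_right_mono)
    then have "of_int J < 1/b + 1/2" using J1 by linarith
    moreover have "1/b \<le> of_int \<lceil>1/b\<rceil>" by simp
    ultimately have "J < \<lceil>1/b\<rceil> + 1" by linarith
    then show ?thesis using J0 by (simp add: j_def)
  qed
  have "circ_dist (real (T + j) * b) d = circ_dist (real j * b + real T * b) (d - real T * b + real T * b)"
    by (simp add: algebra_simps)
  also have "\<dots> = circ_dist (real j * b) (d - real T * b)" by (rule circ_dist_translate)
  also have "\<dots> \<le> \<bar>real j * b - (d - real T * b) - of_int (- \<lfloor>d - real T * b\<rfloor>)\<bar>" by (rule circ_dist_le_diff_int)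
  also have "\<dots> = \<bar>real j * b - z\<bar>" by (simp add: z_def frac_def)
  also have "\<dots> \<le> b/2" by fact
  finally show ?thesis using jK by (intro exI[of _ "T + j"]) auto
qed

lemma rotation_steps_to_target:
  assumes b: "0 < b" and \<rho>: "\<rho> = b \<or> \<rho> = - b"
  shows "\<exists>k. T \<le> k \<and> k \<le> T + nat \<lceil>1/b\<rceil> \<and> circ_dist (x + real k * \<rho>) e \<le> b/2"
  using \<rho>
proof
  assume "\<rho> = b"
  obtain k where k: "T \<le> k" "k \<le> T + nat \<lceil>1/b\<rceil>" "circ_dist (real k * b) (e - x) \<le> b/2"
    using rotation_multiple_near[OF b] by blast
  moreover have "circ_dist (x + real k * b) e = circ_dist (real k * b) (e - x)"
    using circ_dist_translate[of "real k * b" x "e - x"] by (simp add: add.commute)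
  ultimately show ?thesis using \<open>\<rho> = b\<close> by auto
next
  assume "\<rho> = - b"
  obtain k where k: "T \<le> k" "k \<le> T + nat \<lceil>1/b\<rceil>" "circ_dist (real k * b) (x - e) \<le> b/2"
    using rotation_multiple_near[OF b] by blast
  moreover have "circ_dist (x + real k * - b) e = circ_dist (real k * b) (x - e)"
  proof -
    have "circ_dist (x + real k * - b) e = circ_dist (- (real k * b)) (- (x - e))"
      using circ_dist_translate[of "- (real k * b)" x "e - x"] by (simp add: add.commute)
    also have "\<dots> = circ_dist (real k * b) (x - e)" by (rule circ_dist_minus)
    finally show ?thesis .
  qed
  ultimately show ?thesis using \<open>\<rho> = - b\<close> by auto
qed

section \<open>Lifts of degree one\<close>

lemma MVT_abs_difference_bounds:
  fixes F D :: "real \<Rightarrow> real"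
  assumes der: "\<And>z. (F has_real_derivative D z) (at z)" and l0: "0 \<le> l"
    and bd: "\<And>z. min x y \<le> z \<Longrightarrow> z \<le> max x y \<Longrightarrow> l \<le> D z \<and> D z \<le> u"
  shows "l * \<bar>y - x\<bar> \<le> \<bar>F y - F x\<bar> \<and> \<bar>F y - F x\<bar> \<le> u * \<bar>y - x\<bar>"
proof -
  have ordered: "l * (q - p) \<le> F q - F p \<and> F q - F p \<le> u * (q - p)"
    if "p \<le> q" "\<And>z. p \<le> z \<Longrightarrow> z \<le> q \<Longrightarrow> l \<le> D z \<and> D z \<le> u" for p q
  proof (cases "p = q")
    case False
    then obtain z where z: "p < z" "z < q" "F q - F p = (q - p) * D z"
      using MVT2[of p q F D] der \<open>p \<le> q\<close> by fastforce
    then have "l \<le> D z" "D z \<le> u" using that(2) by auto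
    then show ?thesis using z by (simp add: mult.commute mult_right_mono)
  qed simp
  show ?thesis
  proof (cases "x \<le> y")
    case True
    then show ?thesis using ordered[of x y] bd mult_nonneg_nonneg[OF l0, of "y - x"] by (simp add: abs_of_nonneg)
  next
    case False
    then show ?thesis using ordered[of y x] bd mult_nonneg_nonneg[OF l0, of "x - y"]
      by (simp add: abs_of_nonneg abs_minus_commute)
  qed
qed

definition degree_one :: "(real \<Rightarrow> real) \<Rightarrow> bool" where
  "degree_one F \<longleftrightarrow> (\<forall>x. F (x + 1) = F x + 1)"

lemma degree_one_add_int: assumes "degree_one F" shows "F (x + of_int k) = F x + of_int k"
proof -
  have pos: "F (x + of_nat m) = F x + of_nat m" for x m
  proof (induction m arbitrary: x)
    case 0 then show ?case by simp
  next
    case (Suc m)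
    have "F (x + of_nat (Suc m)) = F ((x + of_nat m) + 1)" by (simp add: algebra_simps)
    also have "\<dots> = F (x + of_nat m) + 1" using assms by (simp add: degree_one_def)
    finally show ?case using Suc by simp
  qed
  show ?thesis
  proof (cases "k \<ge> 0")
    case True
    then obtain m where "k = int m" by (metis nonneg_eq_int)
    then show ?thesis using pos by simp
  next
    case False
    then obtain m where m: "k = - int m" by (intro that[of "nat (-k)"]) simp
    have "F x = F ((x + of_int k) + of_nat m)" using m by simp
    also have "\<dots> = F (x + of_int k) + of_nat m" by (rule pos)
    finally show ?thesis using m by simp
  qed
qed

lemma degree_one_circ_dist_bounds:
  assumes "degree_one F" and der: "\<And>z. (F has_real_derivative D z) (at z)"
    and bd: "\<And>z. l \<le> D z \<and> D z \<le> u" and l0: "0 \<le> l"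
  shows "circ_dist (F x) (F y) \<le> u * circ_dist x y"
    and "l * circ_dist x y \<le> circ_dist (F x) (F y)"
proof -
  have gen: "l * \<bar>y - x\<bar> \<le> \<bar>F y - F x\<bar> \<and> \<bar>F y - F x\<bar> \<le> u * \<bar>y - x\<bar>" for x y
    using MVT_abs_difference_bounds[OF der l0] bd by blast
  obtain k where k: "circ_dist x y = \<bar>x - y - of_int k\<bar>" using circ_dist_attained by blast
  have "circ_dist (F x) (F y) \<le> \<bar>F x - F y - of_int k\<bar>" by (rule circ_dist_le_diff_int)
  also have "\<dots> = \<bar>F x - F (y + of_int k)\<bar>" using degree_one_add_int[OF assms(1)] by simp
  also have "\<dots> \<le> u * \<bar>x - (y + of_int k)\<bar>" using gen[of "y + of_int k" x] by (simp add: abs_minus_commute)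
  finally show "circ_dist (F x) (F y) \<le> u * circ_dist x y" using k by (simp add: algebra_simps)
  obtain j where j: "circ_dist (F x) (F y) = \<bar>F x - F y - of_int j\<bar>" using circ_dist_attained by blast
  have "l * circ_dist x y \<le> l * \<bar>x - y - of_int j\<bar>" using circ_dist_le_diff_int[of x y j] l0 by (simp add: mult_left_mono)
  also have "\<dots> \<le> \<bar>F x - F (y + of_int j)\<bar>" using gen[of "y + of_int j" x] by (simp add: abs_minus_commute algebra_simps)
  also have "\<dots> = circ_dist (F x) (F y)" using j degree_one_add_int[OF assms(1)] by simp
  finally show "l * circ_dist x y \<le> circ_dist (F x) (F y)" .
qed

lemma degree_one_local_circ_dist_bounds:
  fixes F D :: "real \<Rightarrow> real"
  assumes L: "degree_one F" and der: "\<And>z. (F has_real_derivative D z) (at z)"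
    and bd: "\<And>z. \<bar>z - c\<bar> < 1/8 \<Longrightarrow> lo \<le> D z \<and> D z \<le> hi" and lo0: "0 \<le> lo"
    and x: "circ_dist x c < r" and y: "circ_dist y c < r" and r: "r \<le> 12/100"
  shows "circ_dist (F x) (F y) \<le> hi * circ_dist x y"
    and "hi * (2 * r) \<le> 1/2 \<Longrightarrow> lo * circ_dist x y \<le> circ_dist (F x) (F y)"
proof -
  obtain k where k: "\<bar>x - of_int k - c\<bar> < r" using circ_dist_less_int_shift[OF x] by blast
  obtain l where l: "\<bar>y - of_int l - c\<bar> < r" using circ_dist_less_int_shift[OF y] by blast
  define x' where "x' = x - of_int k"
  define y' where "y' = y - of_int l"
  have Fx: "F x = F x' + of_int k" using degree_one_add_int[OF L, of x' k] by (simp add: x'_def)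
  have Fy: "F y = F y' + of_int l" using degree_one_add_int[OF L, of y' l] by (simp add: y'_def)
  have exy: "circ_dist (F x) (F y) = circ_dist (F x') (F y')"
    unfolding Fx Fy circ_dist_add_int_left circ_dist_add_int_right ..
  have cxy: "circ_dist x y = circ_dist x' y'"
  proof -
    have "x = x' + of_int k" "y = y' + of_int l" by (simp_all add: x'_def y'_def)
    then show ?thesis using circ_dist_add_int_left[of x' k] circ_dist_add_int_right[of x' y' l] by simp
  qed
  have x1: "\<bar>x' - c\<bar> < r" and y1: "\<bar>y' - c\<bar> < r" using k l by (simp_all add: x'_def y'_def)
  have dxy0: "\<bar>x' - y'\<bar> < 2 * r" using x1 y1 by linarith
  have dxy: "\<bar>x' - y'\<bar> < 24/100" using dxy0 r by linarith
  have cxy2: "circ_dist x' y' = \<bar>x' - y'\<bar>" using dxy by (intro circ_dist_eq_abs) simp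
  have "\<bar>z - c\<bar> < 1/8" if "min y' x' \<le> z" "z \<le> max y' x'" for z using that x1 y1 r by linarith
  then have gen: "lo * \<bar>x' - y'\<bar> \<le> \<bar>F x' - F y'\<bar> \<and> \<bar>F x' - F y'\<bar> \<le> hi * \<bar>x' - y'\<bar>"
    using MVT_abs_difference_bounds[OF der lo0, of y' x' hi] bd by blast
  show "circ_dist (F x) (F y) \<le> hi * circ_dist x y"
    unfolding exy cxy cxy2 using gen circ_dist_le_abs[of "F x'" "F y'"] by linarith
  assume h: "hi * (2 * r) \<le> 1/2"
  have hi0: "0 \<le> hi" using bd[of c] lo0 by simp
  have "\<bar>F x' - F y'\<bar> \<le> 1/2"
  proof -
    have "hi * \<bar>x' - y'\<bar> \<le> hi * (2 * r)" using dxy0 hi0 by (intro mult_left_mono) auto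
    then show ?thesis using gen h by linarith
  qed
  then have "circ_dist (F x') (F y') = \<bar>F x' - F y'\<bar>" by (rule circ_dist_eq_abs)
  then show "lo * circ_dist x y \<le> circ_dist (F x) (F y)" unfolding exy cxy cxy2 using gen by simp
qed

lemma circle_diffeo_degree_one: "circle_diffeo F \<Longrightarrow> degree_one F"
  by (simp add: circle_diffeo_def degree_one_def)

lemma circle_diffeo_has_deriv: "circle_diffeo F \<Longrightarrow> (F has_real_derivative deriv F x) (at x)"
  by (simp add: circle_diffeo_def)

lemma circle_diffeo_continuous_on: "circle_diffeo F \<Longrightarrow> continuous_on S F"
  by (meson DERIV_isCont circle_diffeo_has_deriv continuous_at_imp_continuous_on)

lemma circle_diffeo_strict_mono: assumes "circle_diffeo F" shows "strict_mono F"
proof (rule strict_monoI)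
  fix x y :: real assume xy: "x < y"
  have "\<exists>y. DERIV F z :> y \<and> y > 0" for z
    using assms by (auto simp: circle_diffeo_def)
  then show "F x < F y" using DERIV_pos_imp_increasing[OF xy] by blast
qed

lemma circle_diffeo_surj: assumes "circle_diffeo F" shows "surj F"
proof -
  have L: "degree_one F" using assms by (rule circle_diffeo_degree_one)
  have "\<exists>x. F x = y" for y
  proof -
    define k where "k = \<lfloor>y - F 0\<rfloor>"
    have k1: "of_int k \<le> y - F 0" "y - F 0 < of_int k + 1" unfolding k_def
      using of_int_floor_le real_of_int_floor_add_one_gt by blast+
    have e1: "F (of_int k) = F 0 + of_int k" using degree_one_add_int[OF L, of 0 k] by simp
    have e2: "F (of_int k + 1) = F 0 + of_int k + 1" using degree_one_add_int[OF L, of 0 "k+1"] by simp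
    have a: "F (of_int k) \<le> y" using e1 k1 by linarith
    have b: "y \<le> F (of_int k + 1)" using e2 k1 by linarith
    show ?thesis using IVT'[of F "of_int k" y "of_int k + 1"] a b circle_diffeo_continuous_on[OF assms] by auto
  qed
  then show ?thesis by (metis surjI)
qed

lemma circle_diffeo_f_inv: "circle_diffeo F \<Longrightarrow> F (inv F y) = y"
  by (simp add: circle_diffeo_surj surj_f_inv_f)

lemma circle_diffeo_deriv_periodic: assumes "circle_diffeo F" shows "deriv F (x + of_int k) = deriv F x"
proof -
  have L: "degree_one F" using assms by (rule circle_diffeo_degree_one)
  have "((\<lambda>t. F (t + of_int k)) has_real_derivative deriv F (x + of_int k)) (at x)"
    using circle_diffeo_has_deriv[OF assms, of "x + of_int k"] DERIV_shift by blast
  moreover have "(\<lambda>t. F (t + of_int k)) = (\<lambda>t. F t + of_int k)" using degree_one_add_int[OF L] by auto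
  moreover have "((\<lambda>t. F t + of_int k) has_real_derivative deriv F x) (at x)"
    using circle_diffeo_has_deriv[OF assms, of x] by (auto intro!: derivative_eq_intros)
  ultimately show ?thesis using DERIV_unique by metis
qed

lemma circle_diffeo_deriv_bounds: assumes "circle_diffeo F"
  shows "\<exists>m M. 0 < m \<and> (\<forall>x. m \<le> deriv F x \<and> deriv F x \<le> M)"
proof -
  have c: "continuous_on {0..1} (deriv F)" using assms by (auto simp: circle_diffeo_def intro: continuous_on_subset)
  obtain x0 where x0: "x0 \<in> {0..1}" "\<forall>x\<in>{0..1}. deriv F x0 \<le> deriv F x"
    using continuous_attains_inf[OF compact_Icc _ c] by auto
  obtain x1 where x1: "x1 \<in> {0..1}" "\<forall>x\<in>{0..1}. deriv F x \<le> deriv F x1"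
    using continuous_attains_sup[OF compact_Icc _ c] by auto
  have "deriv F x0 \<le> deriv F x \<and> deriv F x \<le> deriv F x1" for x
  proof -
    define k where "k = \<lfloor>x\<rfloor>"
    have k1: "of_int k \<le> x" "x < of_int k + 1" unfolding k_def
      using of_int_floor_le real_of_int_floor_add_one_gt by blast+
    have "x - of_int k \<in> {0..1}" using k1 by simp
    moreover have "deriv F x = deriv F (x - of_int k)" using circle_diffeo_deriv_periodic[OF assms, of "x - of_int k" k] by simp
    ultimately show ?thesis using x0 x1 by auto
  qed
  moreover have "0 < deriv F x0" using assms by (simp add: circle_diffeo_def)
  ultimately show ?thesis by blast
qed

lemma inv_circ_dist_close:
  assumes F1: "circle_diffeo F1" and F2: "circle_diffeo F2"
    and lo: "\<And>u v. l * circ_dist u v \<le> circ_dist (F1 u) (F1 v)" and l0: "0 < l"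
    and cl: "\<And>w. circ_dist (F1 w) (F2 w) \<le> E"
  shows "circ_dist (inv F1 z) (inv F2 z) \<le> (1 / l) * E"
proof -
  define w where "w = inv F2 z"
  have "z = F2 w" using circle_diffeo_f_inv[OF F2] by (simp add: w_def)
  have "l * circ_dist (inv F1 z) w \<le> circ_dist (F1 (inv F1 z)) (F1 w)" by (rule lo)
  also have "\<dots> = circ_dist (F2 w) (F1 w)" using circle_diffeo_f_inv[OF F1] \<open>z = F2 w\<close> by simp
  also have "\<dots> \<le> E" using cl[of w] circ_dist_commute by metis
  finally show ?thesis using l0 by (simp add: w_def field_simps)
qed

lemma linear_recurrence_bound:
  fixes W d :: "nat \<Rightarrow> real"
  assumes "\<And>j. j < N \<Longrightarrow> W (Suc j) \<le> c * W j + d j" and "0 \<le> c"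
  shows "W N \<le> c ^ N * W 0 + (\<Sum>j<N. c ^ (N - 1 - j) * d j)"
  using assms(1)
proof (induction N)
  case 0 then show ?case by simp
next
  case (Suc N)
  have IH: "W N \<le> c ^ N * W 0 + (\<Sum>j<N. c ^ (N - 1 - j) * d j)" using Suc by simp
  have "W (Suc N) \<le> c * W N + d N" using Suc by simp
  also have "\<dots> \<le> c * (c ^ N * W 0 + (\<Sum>j<N. c ^ (N - 1 - j) * d j)) + d N"
    using IH assms(2) by (simp add: mult_left_mono)
  also have "\<dots> = c ^ Suc N * W 0 + ((\<Sum>j<N. c ^ (Suc N - 1 - j) * d j) + d N)"
  proof -
    have "c * (\<Sum>j<N. c ^ (N - 1 - j) * d j) = (\<Sum>j<N. c ^ (Suc N - 1 - j) * d j)"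
      unfolding sum_distrib_left
    proof (rule sum.cong)
      fix j assume "j \<in> {..<N}"
      then have "Suc N - 1 - j = Suc (N - 1 - j)" by auto
      then show "c * (c ^ (N - 1 - j) * d j) = c ^ (Suc N - 1 - j) * d j" by simp
    qed simp
    then show ?thesis by (simp add: algebra_simps)
  qed
  also have "\<dots> = c ^ Suc N * W 0 + (\<Sum>j<Suc N. c ^ (Suc N - 1 - j) * d j)" by simp
  finally show ?case .
qed

lemma recurrence_prod_bound:
  fixes d l :: "nat \<Rightarrow> real"
  assumes step: "\<And>i. i < K \<Longrightarrow> d (Suc i) \<le> e + l i * d i" and l: "\<And>i. i < K \<Longrightarrow> 1 \<le> l i" and e: "0 \<le> e"
  shows "d K \<le> (\<Prod>i<K. l i) * (d 0 + real K * e)"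
  using step l
proof (induction K)
  case 0 then show ?case by simp
next
  case (Suc K)
  define p where "p = (\<Prod>i<K. l i)"
  have p1: "1 \<le> p" unfolding p_def using Suc.prems(2) by (intro prod_ge_1) auto
  have lK: "1 \<le> l K" using Suc.prems(2) by simp
  have IH: "d K \<le> p * (d 0 + real K * e)" unfolding p_def using Suc by simp
  have "d (Suc K) \<le> e + l K * d K" using Suc.prems(1) by simp
  also have "\<dots> \<le> e + l K * (p * (d 0 + real K * e))" using IH lK by (simp add: mult_left_mono)
  also have "\<dots> \<le> l K * p * (d 0 + real (Suc K) * e)"
  proof -
    have "1 * 1 \<le> l K * p" using lK p1 by (intro mult_mono) auto
    then have "1 * e \<le> l K * p * e" using e by (intro mult_right_mono) auto
    then show ?thesis by (simp add: algebra_simps)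
  qed
  finally show ?case by (simp add: p_def mult.commute)
qed

lemma prod_single_exception_le:
  fixes G c :: real and p :: "nat option"
  assumes "1 \<le> c" "1 \<le> G"
  shows "(\<Prod>i<P. if p = Some i then G else c) \<le> G * c ^ P"
proof -
  have "(\<Prod>i<P. if p = Some i then G else c) \<le> (\<Prod>i<P. (if p = Some i then G else 1) * c)"
    using assms by (intro prod_mono) auto
  also have "\<dots> = (\<Prod>i<P. if p = Some i then G else 1) * c ^ P" by (simp add: prod.distrib)
  also have "(\<Prod>i<P. if p = Some i then G else 1) \<le> G"
  proof (cases p)
    case (Some k)
    then have "(\<Prod>i<P. if p = Some i then G else 1) = (\<Prod>i<P. if i = k then G else 1)"
      by (intro prod.cong) auto
    then show ?thesis using assms by simp
  qed (use assms in simp)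
  then have "(\<Prod>i<P. if p = Some i then G else 1) * c ^ P \<le> G * c ^ P"
    using assms by (intro mult_right_mono) auto
  finally show ?thesis .
qed

lemma eventually_mult_power_le:
  fixes K e q :: real
  assumes K: "0 \<le> K" and e: "0 < e" and q: "0 \<le> q" "q < 1"
  shows "\<exists>N0. \<forall>N\<ge>N0. K * q ^ N \<le> e"
proof -
  have "0 < e / (K + 1)" using K e by simp
  then obtain N0 where N0: "q ^ N0 < e / (K + 1)" using real_arch_pow_inv[OF _ q(2)] by blast
  have "K * q ^ N \<le> e" if "N \<ge> N0" for N
  proof -
    have "q ^ N \<le> q ^ N0" using that q by (intro power_decreasing) auto
    then have "(K + 1) * q ^ N \<le> (K + 1) * q ^ N0" using K by (intro mult_left_mono) auto
    also have "\<dots> < e" using N0 K by (simp add: field_simps)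
    finally have "(K + 1) * q ^ N \<le> e" by simp
    moreover have "K * q ^ N \<le> (K + 1) * q ^ N" using q by (intro mult_right_mono) auto
    ultimately show ?thesis by linarith
  qed
  then show ?thesis by blast
qed

lemma exists_power_ge:
  fixes c G :: real
  assumes "1 < c"
  shows "\<exists>P\<ge>m. G \<le> c ^ P"
proof -
  obtain P1 where "G < c ^ P1" using real_arch_pow[OF assms] by blast
  moreover have "c ^ P1 \<le> c ^ max P1 m" using assms by (intro power_increasing) auto
  ultimately show ?thesis by (intro exI[of _ "max P1 m"]) auto
qed

lemma min_mult_power_Suc_le:
  fixes q m s0 x :: real
  assumes "1 \<le> q" "0 \<le> x" "min m (s0 * q ^ k) \<le> x" "0 \<le> m"
  shows "min m (s0 * q ^ Suc k) \<le> q * x"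
proof -
  have "min m (s0 * q ^ Suc k) \<le> q * min m (s0 * q ^ k)"
  proof (cases "m \<le> s0 * q ^ k")
    case True
    then have m: "min m (s0 * q ^ k) = m" by simp
    have "m \<le> q * m" using assms(1,4) by (simp add: mult_le_cancel_right1)
    then show ?thesis unfolding m by linarith
  next
    case False
    then have "min m (s0 * q ^ k) = s0 * q ^ k" by simp
    moreover have "s0 * q ^ Suc k = q * (s0 * q ^ k)" by (simp add: algebra_simps)
    moreover have "min m (s0 * q ^ Suc k) \<le> s0 * q ^ Suc k" by simp
    ultimately show ?thesis by metis
  qed
  also have "\<dots> \<le> q * x" using assms by (intro mult_left_mono) auto
  finally show ?thesis .
qed

lemma sum_half_powers_le: "(\<Sum>j<M. (1/2::real) ^ (M + I - j)) \<le> (1/2) ^ I"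
proof (induction M)
  case 0 then show ?case by simp
next
  case (Suc M)
  have "(\<Sum>j<Suc M. (1/2::real) ^ (Suc M + I - j)) = (\<Sum>j<M. (1/2::real) ^ (Suc M + I - j)) + (1/2) ^ Suc I"
    by simp
  also have "(\<Sum>j<M. (1/2::real) ^ (Suc M + I - j)) = (1/2) * (\<Sum>j<M. (1/2::real) ^ (M + I - j))"
    unfolding sum_distrib_left
  proof (rule sum.cong)
    fix j assume "j \<in> {..<M}"
    then have "Suc M + I - j = Suc (M + I - j)" by auto
    then show "(1/2::real) ^ (Suc M + I - j) = 1/2 * (1/2) ^ (M + I - j)" by simp
  qed simp
  finally show ?case using Suc by simp
qed

lemma split_sum_bound:
  fixes x :: "nat \<Rightarrow> real"
  assumes A0: "0 \<le> A" and B0: "0 \<le> B"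
    and h1: "\<And>j. j < N \<Longrightarrow> N - I \<le> j \<Longrightarrow> x j \<le> A"
    and h2: "\<And>j. j < N - I \<Longrightarrow> x j \<le> B * (1/2) ^ (N - j)"
  shows "(\<Sum>j<N. x j) \<le> real I * A + B * (1/2) ^ I"
proof -
  define M where "M = N - I"
  have MN: "M \<le> N" by (simp add: M_def)
  have split: "(\<Sum>j<N. x j) = (\<Sum>j\<in>{0..<M}. x j) + (\<Sum>j\<in>{M..<N}. x j)"
    using sum.atLeastLessThan_concat[OF _ MN, of 0 x] by (simp add: atLeast0LessThan)
  have s2: "(\<Sum>j\<in>{M..<N}. x j) \<le> real I * A"
  proof -
    have "(\<Sum>j\<in>{M..<N}. x j) \<le> of_nat (card {M..<N}) * A"
      by (rule sum_bounded_above) (use h1 in \<open>auto simp: M_def\<close>)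
    also have "\<dots> \<le> real I * A" using A0 by (intro mult_right_mono) (auto simp: M_def)
    finally show ?thesis .
  qed
  have s1: "(\<Sum>j\<in>{0..<M}. x j) \<le> B * (1/2) ^ I"
  proof (cases "I \<le> N")
    case True
    have "(\<Sum>j\<in>{0..<M}. x j) \<le> (\<Sum>j<M. B * (1/2) ^ (M + I - j))"
      unfolding atLeast0LessThan
    proof (rule sum_mono)
      fix j assume "j \<in> {..<M}"
      then have "j < N - I" "N - j = M + I - j" using True by (auto simp: M_def)
      then show "x j \<le> B * (1/2) ^ (M + I - j)" using h2 by metis
    qed
    also have "\<dots> = B * (\<Sum>j<M. (1/2) ^ (M + I - j))" by (simp add: sum_distrib_left)
    also have "\<dots> \<le> B * (1/2) ^ I" using sum_half_powers_le B0 by (intro mult_left_mono) auto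
    finally show ?thesis .
  next
    case False
    then have "M = 0" by (simp add: M_def)
    then show ?thesis using B0 by simp
  qed
  show ?thesis using split s1 s2 by linarith
qed

lemma power_Suc_times_inverse_square:
  fixes r :: real assumes "r > 0"
  shows "r ^ Suc k * (1 / r ^ 2) ^ k = r ^ 2 * (1 / r) ^ Suc k"
proof -
  have a: "r ^ k * (1 / r) ^ k = 1" using assms by (simp add: power_one_over)
  have "(1 / r ^ 2) ^ k = ((1 / r) ^ k) * ((1 / r) ^ k)"
    by (simp add: power_one_over power_mult[symmetric] power2_eq_square power_mult_distrib mult.commute)
  then have "r ^ Suc k * (1 / r ^ 2) ^ k = r * (r ^ k * (1 / r) ^ k) * (1 / r) ^ k" by (simp add: algebra_simps)
  also have "\<dots> = r * (1 / r) ^ k" using a by simp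
  also have "\<dots> = r ^ 2 * (1 / r) ^ Suc k" using assms by (simp add: power2_eq_square)
  finally show ?thesis .
qed

lemma width_sum_bound:
  fixes \<Gamma> r D1 D2 \<delta> kP :: real and N P I :: nat
  assumes r2: "2 \<le> r" and Gam: "0 \<le> \<Gamma>" "\<Gamma> \<le> r" and kP: "0 \<le> kP" "kP \<le> 1 / r ^ 2"
    and D: "0 \<le> D1" "0 \<le> D2" "0 \<le> \<delta>"
  shows "(\<Sum>j<N. \<Gamma> ^ (N - 1 - j) * (\<Gamma> * (real P * min (D1 * \<delta>) (D2 * kP ^ (N - 1 - j)))))
      \<le> real I * (r ^ I * (real P * (D1 * \<delta>))) + (real P * D2 * r ^ 2) * (1/2) ^ I"
proof (rule split_sum_bound)
  show "0 \<le> r ^ I * (real P * (D1 * \<delta>))" using r2 D by simp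
  show "0 \<le> real P * D2 * r ^ 2" using D by simp
next
  fix j assume j: "j < N" "N - I \<le> j"
  have nj: "N - j = Suc (N - 1 - j)" using j(1) by simp
  have e: "\<Gamma> ^ (N - 1 - j) * \<Gamma> = \<Gamma> ^ (N - j)" unfolding nj by (simp add: power_Suc2)
  have "\<Gamma> ^ (N - j) \<le> r ^ (N - j)" using Gam by (intro power_mono) auto
  also have "\<dots> \<le> r ^ I" using r2 j by (intro power_increasing) auto
  finally have g: "\<Gamma> ^ (N - j) \<le> r ^ I" .
  have m: "0 \<le> real P * min (D1 * \<delta>) (D2 * kP ^ (N - 1 - j))" using D kP by simp
  have "\<Gamma> ^ (N - 1 - j) * (\<Gamma> * (real P * min (D1 * \<delta>) (D2 * kP ^ (N - 1 - j))))
      = \<Gamma> ^ (N - j) * (real P * min (D1 * \<delta>) (D2 * kP ^ (N - 1 - j)))" using e by (simp add: mult.assoc[symmetric])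
  also have "\<dots> \<le> r ^ I * (real P * min (D1 * \<delta>) (D2 * kP ^ (N - 1 - j)))" using g m by (intro mult_right_mono)
  also have "\<dots> \<le> r ^ I * (real P * (D1 * \<delta>))" using r2 by (intro mult_left_mono) (auto intro: mult_left_mono)
  finally show "\<Gamma> ^ (N - 1 - j) * (\<Gamma> * (real P * min (D1 * \<delta>) (D2 * kP ^ (N - 1 - j)))) \<le> r ^ I * (real P * (D1 * \<delta>))" .
next
  fix j assume j: "j < N - I"
  then have jN: "j < N" by simp
  define k where "k = N - 1 - j"
  have k: "N - j = Suc k" "N - 1 - j = k" using jN by (simp_all add: k_def)
  have e: "\<Gamma> ^ (N - 1 - j) * \<Gamma> = \<Gamma> ^ Suc k" using k by (simp add: mult.commute)
  have "\<Gamma> ^ (N - 1 - j) * (\<Gamma> * (real P * min (D1 * \<delta>) (D2 * kP ^ (N - 1 - j))))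
      = \<Gamma> ^ Suc k * (real P * min (D1 * \<delta>) (D2 * kP ^ k))"
    using e k by (simp add: mult.assoc[symmetric])
  also have "\<dots> \<le> \<Gamma> ^ Suc k * (real P * (D2 * kP ^ k))"
    using Gam by (intro mult_left_mono) auto
  also have "\<dots> \<le> r ^ Suc k * (real P * (D2 * (1 / r ^ 2) ^ k))"
    using Gam kP D by (intro mult_mono power_mono) auto
  also have "\<dots> = (real P * D2) * (r ^ Suc k * (1 / r ^ 2) ^ k)" by (simp add: algebra_simps)
  also have "\<dots> = (real P * D2 * r ^ 2) * (1 / r) ^ Suc k" using power_Suc_times_inverse_square[of r k] r2 by simp
  also have "\<dots> \<le> (real P * D2 * r ^ 2) * (1 / 2) ^ Suc k"
    using D r2 by (intro mult_left_mono power_mono) (auto simp: field_simps)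
  finally show "\<Gamma> ^ (N - 1 - j) * (\<Gamma> * (real P * min (D1 * \<delta>) (D2 * kP ^ (N - 1 - j)))) \<le> real P * D2 * r ^ 2 * (1 / 2) ^ (N - j)"
    using k by simp
qed

lemma width_arith_bound:
  fixes \<Gamma> r G D1 D2 \<delta> kP :: real and n N P I :: nat
  assumes r2: "2 \<le> r" and Gam: "0 \<le> \<Gamma>" "\<Gamma> \<le> r" and kP: "0 \<le> kP" "kP \<le> 1 / r ^ 2"
    and G0: "0 \<le> G" and D: "0 \<le> D1" "0 \<le> D2" "0 \<le> \<delta>"
  shows "\<Gamma> ^ N * (G ^ n * (real n * (D2 * kP ^ N)))
     + (\<Sum>j<N. \<Gamma> ^ (N - 1 - j) * (\<Gamma> * (real P * min (D1 * \<delta>) (D2 * kP ^ (N - 1 - j)))))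
     \<le> G ^ n * real n * D2 * (1 / r) ^ N + (real I * (r ^ I * (real P * (D1 * \<delta>))) + (real P * D2 * r ^ 2) * (1/2) ^ I)"
proof -
  have r0: "0 < r" using r2 by simp
  have t1: "\<Gamma> ^ N * (G ^ n * (real n * (D2 * kP ^ N))) \<le> G ^ n * real n * D2 * (1 / r) ^ N"
  proof -
    have "\<Gamma> ^ N * kP ^ N \<le> r ^ N * (1 / r ^ 2) ^ N"
      using Gam kP by (intro mult_mono power_mono) auto
    also have "\<dots> = (r * (1 / r ^ 2)) ^ N" by (rule power_mult_distrib[symmetric])
    also have "r * (1 / r ^ 2) = 1 / r" using r0 by (simp add: power2_eq_square)
    finally have "\<Gamma> ^ N * kP ^ N \<le> (1 / r) ^ N" by simp
    then have "(G ^ n * real n * D2) * (\<Gamma> ^ N * kP ^ N) \<le> (G ^ n * real n * D2) * (1 / r) ^ N"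
      using G0 D by (intro mult_left_mono) auto
    then show ?thesis by (simp add: algebra_simps)
  qed
  have t2: "(\<Sum>j<N. \<Gamma> ^ (N - 1 - j) * (\<Gamma> * (real P * min (D1 * \<delta>) (D2 * kP ^ (N - 1 - j)))))
      \<le> real I * (r ^ I * (real P * (D1 * \<delta>))) + (real P * D2 * r ^ 2) * (1/2) ^ I"
    by (rule width_sum_bound[OF r2 Gam kP D])
  show ?thesis using t1 t2 by linarith
qed

lemma shift_Sigma2: "\<omega> \<in> Sigma2 \<Longrightarrow> shift k \<omega> \<in> Sigma2"
  by (simp add: Sigma2_def shift_def)

lemma shift_at_0: "shift k \<omega> 0 = \<omega> k"
  by (simp add: shift_def)

lemma shift_shift: "shift a (shift b \<omega>) = shift (a + b) \<omega>"
  by (rule ext) (simp add: shift_def algebra_simps)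

lemma cylinder_Sigma2: "\<omega> \<in> cylinder t \<beta> \<Longrightarrow> \<omega> \<in> Sigma2"
  by (simp add: cylinder_def)

lemma cylinder_agree: "\<omega> \<in> cylinder t \<beta> \<Longrightarrow> \<omega>' \<in> cylinder t \<beta> \<Longrightarrow> - int t \<le> i \<Longrightarrow> i < int t \<Longrightarrow> \<omega> i = \<omega>' i"
  by (simp add: cylinder_def)

lemma cylinder_mono:
  assumes "\<forall>i. - int t \<le> i \<and> i < int t \<longrightarrow> \<beta>' i = \<beta> i" "t \<le> t'"
  shows "cylinder t' \<beta>' \<subseteq> cylinder t \<beta>"
  using assms by (auto simp: cylinder_def)

lemma cylinder_self: "\<beta> \<in> Sigma2 \<Longrightarrow> \<beta> \<in> cylinder t \<beta>"
  by (simp add: cylinder_def)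

lemma dSigma_powr_le:
  assumes agree: "\<And>i. \<bar>i\<bar> < int R \<Longrightarrow> \<omega> i = \<omega>' i" and a0: "0 < \<alpha>"
  shows "dSigma \<omega> \<omega>' powr \<alpha> \<le> (2 powr (-\<alpha>)) ^ R"
proof (cases "\<omega> = \<omega>'")
  case True then show ?thesis by (simp add: dSigma_def)
next
  case False
  define K where "K = (LEAST k::nat. \<exists>i. \<bar>i\<bar> = int k \<and> \<omega> i \<noteq> \<omega>' i)"
  obtain i where i: "\<omega> i \<noteq> \<omega>' i" using False by auto
  have ex: "\<exists>k::nat. \<exists>i. \<bar>i\<bar> = int k \<and> \<omega> i \<noteq> \<omega>' i"
    using i by (intro exI[of _ "nat \<bar>i\<bar>"]) auto
  have KR: "R \<le> K"
  proof -
    obtain j where j: "\<bar>j\<bar> = int K" "\<omega> j \<noteq> \<omega>' j" using LeastI_ex[OF ex] unfolding K_def by blast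
    show ?thesis using agree[of j] j by (cases "R \<le> K") auto
  qed
  have d: "dSigma \<omega> \<omega>' = 2 powr (- real K)" using False by (simp add: dSigma_def K_def)
  have "dSigma \<omega> \<omega>' powr \<alpha> = 2 powr (- real K * \<alpha>)" unfolding d by (simp add: powr_powr)
  also have "\<dots> \<le> 2 powr (- real R * \<alpha>)" using KR a0 by (intro powr_mono) auto
  also have "\<dots> = (2 powr (-\<alpha>)) ^ R" by (simp add: powr_realpow[symmetric] powr_powr mult.commute)
  finally show ?thesis .
qed

section \<open>Compositions along a symbol sequence\<close>

fun orbit :: "((int\<Rightarrow>nat) \<Rightarrow> nat \<Rightarrow> real \<Rightarrow> real) \<Rightarrow> (int\<Rightarrow>nat) \<Rightarrow> real \<Rightarrow> nat \<Rightarrow> real" where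
  "orbit H \<omega> x 0 = x"
| "orbit H \<omega> x (Suc t) = H \<omega> t (orbit H \<omega> x t)"

lemma orbit_Suc_front:
  assumes "\<And>s. H \<omega>' s = H \<omega> (Suc s)"
  shows "orbit H \<omega> x (Suc t) = orbit H \<omega>' (H \<omega> 0 x) t"
proof (induction t)
  case 0 then show ?case by simp
next
  case (Suc t)
  have "orbit H \<omega> x (Suc (Suc t)) = H \<omega> (Suc t) (orbit H \<omega> x (Suc t))" by simp
  also have "\<dots> = H \<omega>' t (orbit H \<omega>' (H \<omega> 0 x) t)" using Suc assms by simp
  finally show ?case by simp
qed

lemma fwd_eq_orbit: "fwd f t \<omega> x = orbit (\<lambda>\<omega> s. f (shift (int s) \<omega>)) \<omega> x t"
proof (induction t arbitrary: \<omega> x)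
  case 0 then show ?case by simp
next
  case (Suc t)
  have "fwd f (Suc t) \<omega> x = fwd f t (shift 1 \<omega>) (f \<omega> x)" by simp
  also have "\<dots> = orbit (\<lambda>\<omega> s. f (shift (int s) \<omega>)) (shift 1 \<omega>) (f \<omega> x) t" by (rule Suc)
  also have "\<dots> = orbit (\<lambda>\<omega> s. f (shift (int s) \<omega>)) \<omega> x (Suc t)"
  proof -
    have h: "\<And>s. f (shift (int s) (shift 1 \<omega>)) = f (shift (int (Suc s)) \<omega>)" by (simp add: shift_shift add.commute)
    have h0: "f (shift (int 0) \<omega>) = f \<omega>" by (simp add: shift_def)
    show ?thesis using orbit_Suc_front[where H="\<lambda>\<omega> s. f (shift (int s) \<omega>)" and \<omega>'="shift 1 \<omega>" and \<omega>=\<omega>, OF h, of x t] h0 by simp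
  qed
  finally show ?case .
qed

lemma bwd_eq_orbit: "bwd f t \<omega> x = orbit (\<lambda>\<omega> s. inv (f (shift (- int s - 1) \<omega>))) \<omega> x t"
proof (induction t arbitrary: \<omega> x)
  case 0 then show ?case by simp
next
  case (Suc t)
  have "bwd f (Suc t) \<omega> x = bwd f t (shift (-1) \<omega>) (inv (f (shift (-1) \<omega>)) x)" by simp
  also have "\<dots> = orbit (\<lambda>\<omega> s. inv (f (shift (- int s - 1) \<omega>))) (shift (-1) \<omega>) (inv (f (shift (-1) \<omega>)) x) t" by (rule Suc)
  also have "\<dots> = orbit (\<lambda>\<omega> s. inv (f (shift (- int s - 1) \<omega>))) \<omega> x (Suc t)"
  proof -
    have h: "\<And>s. inv (f (shift (- int s - 1) (shift (-1) \<omega>))) = inv (f (shift (- int (Suc s) - 1) \<omega>))"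
      by (simp add: shift_shift algebra_simps)
    have h0: "inv (f (shift (- int 0 - 1) \<omega>)) = inv (f (shift (-1) \<omega>))" by simp
    show ?thesis using orbit_Suc_front[where H="\<lambda>\<omega> s. inv (f (shift (- int s - 1) \<omega>))" and \<omega>'="shift (-1) \<omega>" and \<omega>=\<omega>, OF h, of x t] h0 by simp
  qed
  finally show ?case .
qed

text \<open>An abstract composition \<open>X \<omega> x t = H \<omega> (t - 1) (\<dots> (H \<omega> 0 x))\<close> whose \<open>s\<close>-th map
  depends mainly on the symbol at position \<open>pos s\<close>: it is \<open>\<delta>\<close>-close to the rotation by \<open>\<rho>\<close> and
  \<open>(1 \<plusminus> \<eta>)\<close>-bi-Lipschitz on the symbol \<open>0\<close>, and expands by \<open>lam\<close> near \<open>e\<close> on the symbol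
  \<open>1\<close>. The forward compositions of the fibre maps and the backward compositions of their inverses
  are both instances.\<close>

locale symbolic_cocycle =
  fixes H :: "(int\<Rightarrow>nat) \<Rightarrow> nat \<Rightarrow> real \<Rightarrow> real"
    and pos :: "nat \<Rightarrow> int"
    and G \<rho> e \<delta> \<eta> lam D1 D2 \<kappa> :: real
  assumes G1: "1 \<le> G" and etaG: "1 + \<eta> \<le> G" and eta0: "0 \<le> \<eta>" and eta1: "\<eta> \<le> 1" and del0: "0 \<le> \<delta>"
    and D10: "0 \<le> D1" and D20: "0 \<le> D2" and kap0: "0 \<le> \<kappa>" and kap1: "\<kappa> \<le> 1"
    and Hlip: "\<omega> \<in> Sigma2 \<Longrightarrow> circ_dist (H \<omega> s x) (H \<omega> s y) \<le> G * circ_dist x y"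
    and Hcolip: "\<omega> \<in> Sigma2 \<Longrightarrow> circ_dist x y \<le> G * circ_dist (H \<omega> s x) (H \<omega> s y)"
    and H0rot: "\<omega> \<in> Sigma2 \<Longrightarrow> \<omega> (pos s) = 0 \<Longrightarrow> circ_dist (H \<omega> s x) (x + \<rho>) \<le> \<delta>"
    and H0lip: "\<omega> \<in> Sigma2 \<Longrightarrow> \<omega> (pos s) = 0 \<Longrightarrow> circ_dist (H \<omega> s x) (H \<omega> s y) \<le> (1+\<eta>) * circ_dist x y"
    and H0colip: "\<omega> \<in> Sigma2 \<Longrightarrow> \<omega> (pos s) = 0 \<Longrightarrow> (1-\<eta>) * circ_dist x y \<le> circ_dist (H \<omega> s x) (H \<omega> s y)"
    and H1exp: "\<omega> \<in> Sigma2 \<Longrightarrow> \<omega> (pos s) = 1 \<Longrightarrow> circ_dist x e < 3/100 \<Longrightarrow> circ_dist y e < 3/100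
        \<Longrightarrow> lam * circ_dist x y \<le> circ_dist (H \<omega> s x) (H \<omega> s y)"
    and Hclose: "\<omega> \<in> Sigma2 \<Longrightarrow> \<omega>' \<in> Sigma2 \<Longrightarrow> \<omega> (pos s) = \<omega>' (pos s)
        \<Longrightarrow> circ_dist (H \<omega> s z) (H \<omega>' s z) \<le> D1 * \<delta>"
    and Hhold: "\<omega> \<in> Sigma2 \<Longrightarrow> \<omega>' \<in> Sigma2 \<Longrightarrow> (\<forall>i. - int t \<le> i \<and> i < int t \<longrightarrow> \<omega> i = \<omega>' i)
        \<Longrightarrow> s < t \<Longrightarrow> circ_dist (H \<omega> s z) (H \<omega>' s z) \<le> D2 * \<kappa> ^ (t - Suc s)"
    and pos_rng: "s < t \<Longrightarrow> - int t \<le> pos s \<and> pos s < int t"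
begin

abbreviation X where "X \<omega> x t \<equiv> orbit H \<omega> x t"

lemma orbit_step_dist:
  assumes "\<omega> \<in> Sigma2" "\<omega>' \<in> Sigma2" and l: "\<And>x y. circ_dist (H \<omega>' s x) (H \<omega>' s y) \<le> l * circ_dist x y"
  shows "circ_dist (X \<omega> x (Suc s)) (X \<omega>' x (Suc s)) \<le>
     circ_dist (H \<omega> s (X \<omega> x s)) (H \<omega>' s (X \<omega> x s)) + l * circ_dist (X \<omega> x s) (X \<omega>' x s)"
proof -
  have "circ_dist (X \<omega> x (Suc s)) (X \<omega>' x (Suc s)) \<le>
      circ_dist (H \<omega> s (X \<omega> x s)) (H \<omega>' s (X \<omega> x s)) + circ_dist (H \<omega>' s (X \<omega> x s)) (H \<omega>' s (X \<omega>' x s))"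
    by (simp add: circ_dist_triangle)
  then show ?thesis using l[of "X \<omega> x s" "X \<omega>' x s"] by linarith
qed

lemma fibre_dist_in_cylinder:
  assumes "\<omega> \<in> cylinder t \<beta>" "\<omega>' \<in> cylinder t \<beta>" "s < t"
  shows "circ_dist (H \<omega> s z) (H \<omega>' s z) \<le> D1 * \<delta>"
    and "circ_dist (H \<omega> s z) (H \<omega>' s z) \<le> D2 * \<kappa> ^ (t - Suc s)"
proof -
  have s: "\<omega> \<in> Sigma2" "\<omega>' \<in> Sigma2" using assms cylinder_Sigma2 by auto
  have "\<omega> (pos s) = \<omega>' (pos s)" using pos_rng[OF assms(3)] cylinder_agree[OF assms(1,2)] by blast
  then show "circ_dist (H \<omega> s z) (H \<omega>' s z) \<le> D1 * \<delta>" using Hclose s by blast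
  show "circ_dist (H \<omega> s z) (H \<omega>' s z) \<le> D2 * \<kappa> ^ (t - Suc s)"
    using Hhold[OF s _ assms(3)] cylinder_agree[OF assms(1,2)] by blast
qed

lemma fibre_lipschitz:
  assumes "\<omega> \<in> Sigma2"
  shows "circ_dist (H \<omega> s x) (H \<omega> s y) \<le> (if \<omega> (pos s) = 0 then 1 + \<eta> else G) * circ_dist x y"
  using H0lip[OF assms] Hlip[OF assms] by auto

lemma orbit_dist_recurrence:
  assumes om: "\<omega> \<in> cylinder t \<beta>" "\<omega>' \<in> cylinder t \<beta>" and s: "s < t"
  shows "circ_dist (X \<omega> x (Suc s)) (X \<omega>' x (Suc s)) \<le> min (D1 * \<delta>) (D2 * \<kappa> ^ (t - Suc s))
      + (if \<beta> (pos s) = 0 then 1 + \<eta> else G) * circ_dist (X \<omega> x s) (X \<omega>' x s)"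
proof -
  have sig: "\<omega> \<in> Sigma2" "\<omega>' \<in> Sigma2" using om cylinder_Sigma2 by auto
  have "\<omega>' (pos s) = \<beta> (pos s)" using om(2) pos_rng[OF s] by (simp add: cylinder_def)
  then have "circ_dist (X \<omega> x (Suc s)) (X \<omega>' x (Suc s)) \<le> circ_dist (H \<omega> s (X \<omega> x s)) (H \<omega>' s (X \<omega> x s))
      + (if \<beta> (pos s) = 0 then 1 + \<eta> else G) * circ_dist (X \<omega> x s) (X \<omega>' x s)"
    using orbit_step_dist[OF sig fibre_lipschitz[OF sig(2)], of x s] by simp
  moreover have "circ_dist (H \<omega> s (X \<omega> x s)) (H \<omega>' s (X \<omega> x s)) \<le> min (D1 * \<delta>) (D2 * \<kappa> ^ (t - Suc s))"
    using fibre_dist_in_cylinder[OF om s] by simp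
  ultimately show ?thesis by linarith
qed

lemma orbit_width:
  fixes n P N :: nat and pf :: "nat \<Rightarrow> nat option"
  defines "t \<equiv> n + N * P"
  defines "\<Gamma> \<equiv> G * (1 + \<eta>) ^ P"
  assumes om: "\<omega> \<in> cylinder t \<beta>" "\<omega>' \<in> cylinder t \<beta>"
    and fmt: "\<And>j i. j < N \<Longrightarrow> i < P \<Longrightarrow> \<beta> (pos (n + j * P + i)) = (if pf j = Some i then 1 else 0)"
  shows "circ_dist (X \<omega> \<phi> t) (X \<omega>' \<phi> t) \<le> \<Gamma> ^ N * (G ^ n * (real n * (D2 * \<kappa> ^ (N * P))))
     + (\<Sum>j<N. \<Gamma> ^ (N - 1 - j) * (\<Gamma> * (real P * min (D1 * \<delta>) (D2 * (\<kappa> ^ P) ^ (N - 1 - j)))))"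
proof -
  define D where "D s = circ_dist (X \<omega> \<phi> s) (X \<omega>' \<phi> s)" for s
  define l where "l s = (if \<beta> (pos s) = 0 then 1 + \<eta> else G)" for s
  have rec: "D (Suc s) \<le> min (D1 * \<delta>) (D2 * \<kappa> ^ (t - Suc s)) + l s * D s" if "s < t" for s
    unfolding D_def l_def by (rule orbit_dist_recurrence[OF om that])
  have l: "1 \<le> l s" "l s \<le> G" for s using etaG eta0 G1 by (auto simp: l_def)
  have D0: "0 \<le> D s" for s by (simp add: D_def circ_dist_nonneg)
  have \<kappa>: "\<kappa> ^ k \<le> \<kappa> ^ k'" if "k' \<le> k" for k k' by (rule power_decreasing[OF that kap0 kap1])
  define E0 where "E0 = D2 * \<kappa> ^ (N * P)"
  have init: "D n \<le> G ^ n * (real n * E0)"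
  proof -
    have "D n \<le> (\<Prod>i<n. l i) * (D 0 + real n * E0)"
    proof (rule recurrence_prod_bound)
      fix i assume "i < n"
      then have "min (D1 * \<delta>) (D2 * \<kappa> ^ (t - Suc i)) \<le> E0"
        using D20 \<kappa>[of "N * P" "t - Suc i"] by (auto simp: E0_def t_def intro!: min.coboundedI2 mult_left_mono)
      then show "D (Suc i) \<le> E0 + l i * D i" using rec[of i] \<open>i < n\<close> by (simp add: t_def)
    qed (use l D20 kap0 in \<open>auto simp: E0_def\<close>)
    also have "\<dots> \<le> G ^ n * (real n * E0)"
    proof (rule mult_mono)
      show "(\<Prod>i<n. l i) \<le> G ^ n"
        using prod_mono[of "{..<n}" l "\<lambda>_. G"] l order_trans[OF zero_le_one l(1)] by simp
    qed (use G1 D20 kap0 in \<open>auto simp: D_def E0_def circ_dist_self\<close>)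
    finally show ?thesis .
  qed
  define Ej where "Ej j = min (D1 * \<delta>) (D2 * (\<kappa> ^ P) ^ (N - 1 - j))" for j
  have Ej0: "0 \<le> Ej j" for j using D10 D20 del0 kap0 by (simp add: Ej_def)
  have cycle: "D (n + Suc j * P) \<le> \<Gamma> * D (n + j * P) + \<Gamma> * (real P * Ej j)" if j: "j < N" for j
  proof -
    define base where "base = n + j * P"
    have step: "D (Suc (base + i)) \<le> Ej j + l (base + i) * D (base + i)" if i: "i < P" for i
    proof -
      have "(Suc j + (N - 1 - j)) * P \<le> N * P" using j by simp
      then have lt: "base + i < t" and "(N - 1 - j) * P \<le> t - Suc (base + i)"
        using i by (auto simp: base_def t_def algebra_simps)
      then have "D2 * \<kappa> ^ (t - Suc (base + i)) \<le> D2 * (\<kappa> ^ P) ^ (N - 1 - j)"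
        using D20 \<kappa> by (auto simp: power_mult[symmetric] mult.commute intro: mult_left_mono)
      then show ?thesis
        using rec[OF lt] by (simp add: Ej_def)
    qed
    have "D (base + P) \<le> (\<Prod>i<P. l (base + i)) * (D base + real P * Ej j)"
      using recurrence_prod_bound[of P "\<lambda>i. D (base + i)" "Ej j" "\<lambda>i. l (base + i)"] step l Ej0 by simp
    also have "\<dots> \<le> \<Gamma> * (D base + real P * Ej j)"
    proof (rule mult_right_mono)
      have "(\<Prod>i<P. l (base + i)) = (\<Prod>i<P. if pf j = Some i then G else 1 + \<eta>)"
        using fmt[OF j] by (intro prod.cong) (auto simp: l_def base_def)
      also have "\<dots> \<le> \<Gamma>" unfolding \<Gamma>_def by (rule prod_single_exception_le) (use G1 eta0 in auto)
      finally show "(\<Prod>i<P. l (base + i)) \<le> \<Gamma>" .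
    qed (use D0 Ej0 in simp)
    finally show ?thesis by (simp add: base_def algebra_simps)
  qed
  have Gam0: "0 \<le> \<Gamma>" using G1 eta0 by (simp add: \<Gamma>_def)
  have "D (n + N * P) \<le> \<Gamma> ^ N * D n + (\<Sum>j<N. \<Gamma> ^ (N - 1 - j) * (\<Gamma> * (real P * Ej j)))"
    using linear_recurrence_bound[where W = "\<lambda>j. D (n + j * P)", OF _ Gam0] cycle by simp
  also have "\<dots> \<le> \<Gamma> ^ N * (G ^ n * (real n * E0)) + (\<Sum>j<N. \<Gamma> ^ (N - 1 - j) * (\<Gamma> * (real P * Ej j)))"
    using init Gam0 by (simp add: mult_left_mono)
  finally show ?thesis by (simp add: D_def E0_def Ej_def t_def)
qed

lemma zero_block_orbit_conj:
  assumes om: "\<omega> \<in> Sigma2" and z: "\<And>i. i < L \<Longrightarrow> \<omega> (pos (base + i)) = 0"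
  shows "i \<le> L \<Longrightarrow> circ_dist (X \<omega> x (base + i)) (X \<omega> x base + real i * \<rho>) \<le> real i * \<delta>
    \<and> circ_dist (X \<omega> x (base + i)) (X \<omega> y (base + i)) \<le> (1 + \<eta>) ^ i * circ_dist (X \<omega> x base) (X \<omega> y base)
    \<and> (1 - \<eta>) ^ i * circ_dist (X \<omega> x base) (X \<omega> y base) \<le> circ_dist (X \<omega> x (base + i)) (X \<omega> y (base + i))"
proof (induction i)
  case 0 then show ?case by (simp add: circ_dist_self)
next
  case (Suc i)
  have iL: "i < L" using Suc.prems by simp
  have zz: "\<omega> (pos (base + i)) = 0" using z[OF iL] .
  have IH1: "circ_dist (X \<omega> x (base + i)) (X \<omega> x base + real i * \<rho>) \<le> real i * \<delta>" using Suc.IH iL by simp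
  have IH2: "circ_dist (X \<omega> x (base + i)) (X \<omega> y (base + i)) \<le> (1 + \<eta>) ^ i * circ_dist (X \<omega> x base) (X \<omega> y base)" using Suc.IH iL by simp
  have IH3: "(1 - \<eta>) ^ i * circ_dist (X \<omega> x base) (X \<omega> y base) \<le> circ_dist (X \<omega> x (base + i)) (X \<omega> y (base + i))" using Suc.IH iL by simp
  have C1: "circ_dist (X \<omega> x (base + Suc i)) (X \<omega> x base + real (Suc i) * \<rho>) \<le> real (Suc i) * \<delta>"
  proof -
    have "circ_dist (X \<omega> x (base + Suc i)) (X \<omega> x base + real (Suc i) * \<rho>)
        \<le> circ_dist (H \<omega> (base + i) (X \<omega> x (base + i))) (X \<omega> x (base + i) + \<rho>)
         + circ_dist (X \<omega> x (base + i) + \<rho>) (X \<omega> x base + real (Suc i) * \<rho>)"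
      by (simp add: circ_dist_triangle)
    also have "circ_dist (X \<omega> x (base + i) + \<rho>) (X \<omega> x base + real (Suc i) * \<rho>) = circ_dist (X \<omega> x (base + i)) (X \<omega> x base + real i * \<rho>)"
      using circ_dist_translate[of "X \<omega> x (base + i)" \<rho> "X \<omega> x base + real i * \<rho>"] by (simp add: algebra_simps)
    finally show ?thesis using H0rot[OF om zz, of "X \<omega> x (base + i)"] IH1 by (simp add: algebra_simps)
  qed
  have C2: "circ_dist (X \<omega> x (base + Suc i)) (X \<omega> y (base + Suc i)) \<le> (1 + \<eta>) ^ Suc i * circ_dist (X \<omega> x base) (X \<omega> y base)"
  proof -
    have "circ_dist (X \<omega> x (base + Suc i)) (X \<omega> y (base + Suc i)) \<le> (1 + \<eta>) * circ_dist (X \<omega> x (base + i)) (X \<omega> y (base + i))"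
      using H0lip[OF om zz] by simp
    also have "\<dots> \<le> (1 + \<eta>) * ((1 + \<eta>) ^ i * circ_dist (X \<omega> x base) (X \<omega> y base))"
      using IH2 eta0 by (intro mult_left_mono) auto
    finally show ?thesis by simp
  qed
  have C3: "(1 - \<eta>) ^ Suc i * circ_dist (X \<omega> x base) (X \<omega> y base) \<le> circ_dist (X \<omega> x (base + Suc i)) (X \<omega> y (base + Suc i))"
  proof -
    have "(1 - \<eta>) ^ Suc i * circ_dist (X \<omega> x base) (X \<omega> y base) = (1 - \<eta>) * ((1 - \<eta>) ^ i * circ_dist (X \<omega> x base) (X \<omega> y base))" by simp
    also have "\<dots> \<le> (1 - \<eta>) * circ_dist (X \<omega> x (base + i)) (X \<omega> y (base + i))"
      using IH3 eta1 by (intro mult_left_mono) auto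
    also have "\<dots> \<le> circ_dist (X \<omega> x (base + Suc i)) (X \<omega> y (base + Suc i))"
      using H0colip[OF om zz] by simp
    finally show ?thesis .
  qed
  show ?case using C1 C2 C3 by blast
qed

lemma zero_block_orbit:
  assumes om: "\<omega> \<in> Sigma2" and z: "\<And>i. i < L \<Longrightarrow> \<omega> (pos (base + i)) = 0" and iL: "i \<le> L"
  shows "circ_dist (X \<omega> x (base + i)) (X \<omega> x base + real i * \<rho>) \<le> real i * \<delta>"
    and "circ_dist (X \<omega> x (base + i)) (X \<omega> y (base + i)) \<le> (1 + \<eta>) ^ i * circ_dist (X \<omega> x base) (X \<omega> y base)"
    and "(1 - \<eta>) ^ i * circ_dist (X \<omega> x base) (X \<omega> y base) \<le> circ_dist (X \<omega> x (base + i)) (X \<omega> y (base + i))"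
  using zero_block_orbit_conj[OF om z iL] by blast+

lemma zero_cycle_contraction:
  assumes om: "\<omega> \<in> Sigma2" and z: "\<And>i. i < P \<Longrightarrow> \<omega> (pos (base + i)) = 0"
  shows "(1 - \<eta>) ^ P * circ_dist (X \<omega> x base) (X \<omega> y base) \<le> circ_dist (X \<omega> x (base + P)) (X \<omega> y (base + P))"
  using zero_block_orbit(3)[OF om z] by simp

lemma one_symbol_cycle_expansion:
  assumes om: "\<omega> \<in> Sigma2" and kP: "k < P"
    and sy: "\<And>i. i < P \<Longrightarrow> \<omega> (pos (base + i)) = (if i = k then 1 else 0)"
    and pl: "circ_dist (X \<omega> x base + real k * \<rho>) e + real k * \<delta> + (1 + \<eta>) ^ k * circ_dist (X \<omega> x base) (X \<omega> y base) < 3/100"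
    and lam0: "0 \<le> lam"
  shows "lam * (1 - \<eta>) ^ (P - 1) * circ_dist (X \<omega> x base) (X \<omega> y base) \<le> circ_dist (X \<omega> x (base + P)) (X \<omega> y (base + P))"
proof -
  define s0 where "s0 = circ_dist (X \<omega> x base) (X \<omega> y base)"
  have s0nn: "0 \<le> s0" by (simp add: s0_def circ_dist_nonneg)
  have z1: "\<And>i. i < k \<Longrightarrow> \<omega> (pos (base + i)) = 0" using sy kP by auto
  have a1: "circ_dist (X \<omega> x (base + k)) (X \<omega> x base + real k * \<rho>) \<le> real k * \<delta>"
    using zero_block_orbit(1)[OF om z1, of k] by simp
  have a2: "circ_dist (X \<omega> x (base + k)) (X \<omega> y (base + k)) \<le> (1 + \<eta>) ^ k * s0"
    using zero_block_orbit(2)[OF om z1, of k] by (simp add: s0_def)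
  have a3: "(1 - \<eta>) ^ k * s0 \<le> circ_dist (X \<omega> x (base + k)) (X \<omega> y (base + k))"
    using zero_block_orbit(3)[OF om z1, of k] by (simp add: s0_def)
  have pw0: "0 \<le> (1 + \<eta>) ^ k * s0" using eta0 s0nn by simp
  have t1: "circ_dist (X \<omega> x (base + k)) e \<le> circ_dist (X \<omega> x (base + k)) (X \<omega> x base + real k * \<rho>) + circ_dist (X \<omega> x base + real k * \<rho>) e"
    by (rule circ_dist_triangle)
  have pl': "circ_dist (X \<omega> x base + real k * \<rho>) e + real k * \<delta> + (1 + \<eta>) ^ k * s0 < 3/100" using pl by (simp add: s0_def)
  have ex: "circ_dist (X \<omega> x (base + k)) e < 3/100" using t1 a1 pl' pw0 by linarith
  have t2: "circ_dist (X \<omega> y (base + k)) e \<le> circ_dist (X \<omega> y (base + k)) (X \<omega> x (base + k)) + circ_dist (X \<omega> x (base + k)) e"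
    by (rule circ_dist_triangle)
  have t3: "circ_dist (X \<omega> y (base + k)) (X \<omega> x (base + k)) = circ_dist (X \<omega> x (base + k)) (X \<omega> y (base + k))"
    by (rule circ_dist_commute)
  have ey: "circ_dist (X \<omega> y (base + k)) e < 3/100" using t1 t2 t3 a1 a2 pl' by linarith
  have one: "\<omega> (pos (base + k)) = 1" using sy[OF kP] by simp
  have b1: "lam * circ_dist (X \<omega> x (base + k)) (X \<omega> y (base + k)) \<le> circ_dist (X \<omega> x (base + Suc k)) (X \<omega> y (base + Suc k))"
    using H1exp[OF om one ex ey] by simp
  have z2: "\<omega> (pos (base + Suc k + i)) = 0" if "i < P - Suc k" for i
  proof -
    have "Suc k + i < P" "Suc k + i \<noteq> k" using that by auto
    then have "\<omega> (pos (base + (Suc k + i))) = 0" using sy[of "Suc k + i"] by (simp only: if_False)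
    then show ?thesis by (simp add: add.assoc)
  qed
  have b2: "(1 - \<eta>) ^ (P - Suc k) * circ_dist (X \<omega> x (base + Suc k)) (X \<omega> y (base + Suc k)) \<le> circ_dist (X \<omega> x (base + P)) (X \<omega> y (base + P))"
  proof -
    have eq: "base + Suc k + (P - Suc k) = base + P" using kP by simp
    show ?thesis using zero_block_orbit(3)[OF om z2, where i="P - Suc k" and x=x and y=y, unfolded eq] by simp
  qed
  have e0: "0 \<le> 1 - \<eta>" using eta1 by simp
  have "lam * (1 - \<eta>) ^ (P - 1) * s0 = (1 - \<eta>) ^ (P - Suc k) * (lam * ((1 - \<eta>) ^ k * s0))"
  proof -
    have "P - 1 = (P - Suc k) + k" using kP by simp
    then show ?thesis by (simp add: power_add algebra_simps)
  qed
  also have "\<dots> \<le> (1 - \<eta>) ^ (P - Suc k) * (lam * circ_dist (X \<omega> x (base + k)) (X \<omega> y (base + k)))"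
    using a3 lam0 e0 by (intro mult_left_mono) auto
  also have "\<dots> \<le> (1 - \<eta>) ^ (P - Suc k) * circ_dist (X \<omega> x (base + Suc k)) (X \<omega> y (base + Suc k))"
    using b1 e0 by (intro mult_left_mono) auto
  also have "\<dots> \<le> circ_dist (X \<omega> x (base + P)) (X \<omega> y (base + P))" using b2 .
  finally show ?thesis by (simp add: s0_def)
qed

lemma cylinder_pattern:
  assumes "\<omega> \<in> cylinder (t + P) \<beta>'" "i < P"
  shows "\<omega> (pos (t + i)) = \<beta>' (pos (t + i))"
proof -
  have "t + i < t + P" using assms(2) by simp
  then show ?thesis using assms(1) pos_rng[of "t + i" "t + P"] by (simp add: cylinder_def)
qed

lemma cycle_without_one:
  assumes om: "\<omega> \<in> cylinder (t + P) \<beta>'" and z: "\<And>i. i < P \<Longrightarrow> \<beta>' (pos (t + i)) = 0"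
  shows "(1 - \<eta>) ^ P * circ_dist (X \<omega> x t) (X \<omega> y t) \<le> circ_dist (X \<omega> x (t + P)) (X \<omega> y (t + P))"
proof (rule zero_cycle_contraction)
  show "\<omega> \<in> Sigma2" using om by (simp add: cylinder_def)
  fix i assume "i < P" then show "\<omega> (pos (t + i)) = 0" using cylinder_pattern[OF om] z by simp
qed

lemma cycle_with_one:
  assumes om: "\<omega> \<in> cylinder (t + P) \<beta>'" and kP: "k < P"
    and sy: "\<And>i. i < P \<Longrightarrow> \<beta>' (pos (t + i)) = (if i = k then 1 else 0)"
    and ref: "circ_dist (X \<omega> x t) xr \<le> eps" and pl: "circ_dist (xr + real k * \<rho>) e \<le> bh"
    and S: "circ_dist (X \<omega> x t) (X \<omega> y t) \<le> S"
    and num: "bh + eps + real k * \<delta> + (1 + \<eta>) ^ k * S < 3/100" and lam0: "0 \<le> lam"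
  shows "lam * (1 - \<eta>) ^ (P - 1) * circ_dist (X \<omega> x t) (X \<omega> y t) \<le> circ_dist (X \<omega> x (t + P)) (X \<omega> y (t + P))"
proof (rule one_symbol_cycle_expansion[OF _ kP _ _ lam0])
  show "\<omega> \<in> Sigma2" using om by (simp add: cylinder_def)
  fix i assume "i < P" then show "\<omega> (pos (t + i)) = (if i = k then 1 else 0)" using cylinder_pattern[OF om] sy by simp
next
  have "circ_dist (X \<omega> x t + real k * \<rho>) e \<le> circ_dist (X \<omega> x t + real k * \<rho>) (xr + real k * \<rho>) + circ_dist (xr + real k * \<rho>) e"
    by (rule circ_dist_triangle)
  also have "circ_dist (X \<omega> x t + real k * \<rho>) (xr + real k * \<rho>) = circ_dist (X \<omega> x t) xr" by (rule circ_dist_translate)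
  finally have a: "circ_dist (X \<omega> x t + real k * \<rho>) e \<le> eps + bh" using ref pl by linarith
  have "(1 + \<eta>) ^ k * circ_dist (X \<omega> x t) (X \<omega> y t) \<le> (1 + \<eta>) ^ k * S" using S eta0 by (intro mult_left_mono) auto
  then show "circ_dist (X \<omega> x t + real k * \<rho>) e + real k * \<delta> + (1 + \<eta>) ^ k * circ_dist (X \<omega> x t) (X \<omega> y t) < 3/100"
    using a num by linarith
qed

lemma orbit_dist_co_lipschitz:
  assumes "\<omega> \<in> Sigma2"
  shows "circ_dist x y \<le> G ^ t * circ_dist (X \<omega> x t) (X \<omega> y t)"
proof (induction t)
  case 0 then show ?case by simp
next
  case (Suc t)
  have "circ_dist x y \<le> G ^ t * circ_dist (X \<omega> x t) (X \<omega> y t)" by (rule Suc)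
  also have "\<dots> \<le> G ^ t * (G * circ_dist (X \<omega> x (Suc t)) (X \<omega> y (Suc t)))"
    using Hcolip[OF assms] G1 by (intro mult_left_mono) auto
  finally show ?case by (simp add: algebra_simps)
qed

end

section \<open>The unperturbed map and mild skew products\<close>

lemma g1_deriv_near_0:
  fixes a :: real and g1 :: "real \<Rightarrow> real"
  assumes l0: "\<forall>x. \<bar>x\<bar> < 1/8 \<longrightarrow> g1 x = a * x" and x: "\<bar>x\<bar> < 1/8"
  shows "deriv g1 x = a"
proof -
  have "((\<lambda>y. a * y) has_real_derivative a) (at x)" by (auto intro!: derivative_eq_intros)
  then have "(g1 has_real_derivative a) (at x)"
    by (rule has_field_derivative_transform_within_open[where S="{-1/8<..<1/8}"])
      (use x l0 in \<open>auto simp: abs_less_iff\<close>)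
  then show ?thesis by (rule DERIV_imp_deriv)
qed

lemma g1_deriv_near_half:
  fixes a :: real and g1 :: "real \<Rightarrow> real"
  assumes a0: "a > 0" and lh: "\<forall>x. \<bar>x - 1/2\<bar> < 1/8 \<longrightarrow> g1 x = 1/2 + (x - 1/2) / a"
    and x: "\<bar>x - 1/2\<bar> < 1/8"
  shows "deriv g1 x = 1/a"
proof -
  have "((\<lambda>y. 1/2 + (y - 1/2) / a) has_real_derivative 1/a) (at x)" using a0 by (auto intro!: derivative_eq_intros)
  then have "(g1 has_real_derivative 1/a) (at x)"
  proof (rule has_field_derivative_transform_within_open[where S="{3/8<..<5/8}"])
    show "open {3/8<..<5/8::real}" by simp
    have "- (1/8) < x - 1/2 \<and> x - 1/2 < 1/8" using x unfolding abs_less_iff by linarith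
    then show "x \<in> {3/8<..<5/8}" by simp
    fix y :: real assume "y \<in> {3/8<..<5/8}"
    then have "- (1/8) < y - 1/2 \<and> y - 1/2 < 1/8" by simp
    then have "\<bar>y - 1/2\<bar> < 1/8" unfolding abs_less_iff by linarith
    then show "1/2 + (y - 1/2) / a = g1 y" using lh by simp
  qed
  then show ?thesis by (rule DERIV_imp_deriv)
qed

lemma g1_slope_bound:
  fixes a :: real and g1 :: "real \<Rightarrow> real"
  assumes ha: "a > 1" and g: "circle_diffeo g1"
    and l0: "\<forall>x. \<bar>x\<bar> < 1/8 \<longrightarrow> g1 x = a * x"
    and lh: "\<forall>x. \<bar>x - 1/2\<bar> < 1/8 \<longrightarrow> g1 x = 1/2 + (x - 1/2) / a"
  shows "a < 19/5"
proof (rule ccontr)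
  assume "\<not> a < 19/5"
  have "g1 (124/1000) < g1 (376/1000)" using circle_diffeo_strict_mono[OF g] by (simp add: strict_mono_less)
  then have i1: "a * (124/1000) < 1/2 - (124/1000) / a" using l0 lh by simp
  have A: "0 \<le> (a - 19/5) * (124/1000 * a - 288/10000)" using \<open>\<not> a < 19/5\<close> by (intro mult_nonneg_nonneg) auto
  have A2: "(a - 19/5) * (124/1000 * a - 288/10000) = 124/1000 * (a * a) - 1/2 * a + 10944/100000"
    by algebra
  have B: "a * (a * (124/1000)) < a * (1/2 - (124/1000) / a)" using i1 ha by (intro mult_strict_left_mono) auto
  have B2: "a * (1/2 - (124/1000) / a) = 1/2 * a - 124/1000" using ha by (simp add: field_simps)
  have B3: "a * (a * (124/1000)) = 124/1000 * (a * a)" by simp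
  show False using A A2 B B2 B3 by linarith
qed

lemma g1_far_from_half:
  fixes a :: real and g1 :: "real \<Rightarrow> real"
  assumes ha: "a > 1" and g: "circle_diffeo g1"
    and l0: "\<forall>x. \<bar>x\<bar> < 1/8 \<longrightarrow> g1 x = a * x"
    and lh: "\<forall>x. \<bar>x - 1/2\<bar> < 1/8 \<longrightarrow> g1 x = 1/2 + (x - 1/2) / a"
    and hp: "12/100 \<le> circ_dist p (1/2)"
  shows "12/100/a \<le> circ_dist (g1 p) (1/2)"
proof -
  have a0: "a > 0" using ha by simp
  have sm: "strict_mono g1" using g by (rule circle_diffeo_strict_mono)
  have L: "degree_one g1" using g by (rule circle_diffeo_degree_one)
  obtain k where k: "circ_dist p (1/2) = \<bar>p - 1/2 - of_int k\<bar>" using circ_dist_attained by blast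
  define p' where "p' = p - of_int k"
  have e1: "g1 p = g1 p' + of_int k" using degree_one_add_int[OF L, of p' k] by (simp add: p'_def)
  have e2: "circ_dist (g1 p) (1/2) = circ_dist (g1 p') (1/2)" unfolding e1 circ_dist_add_int_left ..
  have pe: "p' - 1/2 = p - 1/2 - of_int k" by (simp add: p'_def)
  have p1: "\<bar>p' - 1/2\<bar> \<le> 1/2" "12/100 \<le> \<bar>p' - 1/2\<bar>" unfolding pe using k hp circ_dist_le_half[of p "1/2"] by linarith+
  have mono: "x \<le> y \<Longrightarrow> g1 x \<le> g1 y" for x y using sm by (simp add: strict_mono_less_eq)
  have g0: "g1 0 = 0" using l0 by simp
  have g11: "g1 1 = 1" using L g0 degree_one_add_int[OF L, of 0 1] by simp
  have g38: "g1 (38/100) = 1/2 - (12/100) / a" using lh by simp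
  have g62: "g1 (62/100) = 1/2 + (12/100) / a" using lh by simp
  have aa: "(12/100) / a \<le> 1/2" using ha by (simp add: field_simps)
  show ?thesis
  proof (cases "p' \<le> 1/2")
    case True
    then have "p' \<le> 38/100" "0 \<le> p'" using p1 by linarith+
    then have "g1 p' \<le> 1/2 - (12/100) / a" "0 \<le> g1 p'" using mono[of p' "38/100"] mono[of 0 p'] g38 g0 by auto
    moreover have "0 \<le> (12/100) / a" using a0 by simp
    ultimately have "g1 p' - 1/2 \<le> 0" by linarith
    then have ab: "\<bar>g1 p' - 1/2\<bar> = 1/2 - g1 p'" by simp
    have "\<bar>g1 p' - 1/2\<bar> \<le> 1/2" "(12/100) / a \<le> \<bar>g1 p' - 1/2\<bar>" unfolding ab using \<open>g1 p' \<le> _\<close> \<open>0 \<le> g1 p'\<close> by linarith+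
    then show ?thesis using e2 circ_dist_eq_abs by simp
  next
    case False
    then have "62/100 \<le> p'" "p' \<le> 1" using p1 by linarith+
    then have "1/2 + (12/100) / a \<le> g1 p'" "g1 p' \<le> 1" using mono[of "62/100" p'] mono[of p' 1] g62 g11 by auto
    moreover have "0 \<le> (12/100) / a" using a0 by simp
    ultimately have "0 \<le> g1 p' - 1/2" by linarith
    then have ab: "\<bar>g1 p' - 1/2\<bar> = g1 p' - 1/2" by simp
    have "\<bar>g1 p' - 1/2\<bar> \<le> 1/2" "(12/100) / a \<le> \<bar>g1 p' - 1/2\<bar>" unfolding ab using \<open>1/2 + _ \<le> g1 p'\<close> \<open>g1 p' \<le> 1\<close> by linarith+
    then show ?thesis using e2 circ_dist_eq_abs by simp
  qed
qed

lemma mild_skew_fibre_close: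
  assumes ms: "mild_skew b g1 \<delta> C \<alpha> f" and om: "\<omega> \<in> Sigma2" and g: "circle_diffeo g1"
    and gb: "\<And>x. 0 \<le> deriv g1 x \<and> deriv g1 x \<le> Mg"
  shows "circle_diffeo (f \<omega>)"
    and "\<And>x. circ_dist (f \<omega> x) (if \<omega> 0 = 0 then x + b else g1 x) < \<delta>"
    and "\<And>x. \<bar>deriv (f \<omega>) x - (if \<omega> 0 = 0 then 1 else deriv g1 x)\<bar> < \<delta>"
proof -
  define Gm where "Gm = (if \<omega> 0 = 0 then (\<lambda>x. x + b) else g1)"
  have c1: "circle_diffeo (f \<omega>)" and cl: "C1_close \<delta> (f \<omega>) Gm"
    using ms om unfolding mild_skew_def Gm_def by auto
  show "circle_diffeo (f \<omega>)" by (rule c1)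
  obtain L where L: "\<And>\<phi>. \<bar>deriv (f \<omega>) \<phi>\<bar> \<le> L" using ms om unfolding mild_skew_def by blast
  have s1: "(SUP x. circ_dist (f \<omega> x) (Gm x)) < \<delta>" and s2: "(SUP x. \<bar>deriv (f \<omega>) x - deriv Gm x\<bar>) < \<delta>"
    using cl unfolding C1_close_def by auto
  have dG: "deriv Gm x = (if \<omega> 0 = 0 then 1 else deriv g1 x)" for x
  proof (cases "\<omega> 0 = 0")
    case True
    have "((\<lambda>x. x + b) has_real_derivative 1) (at x)" by (auto intro!: derivative_eq_intros)
    then show ?thesis using True by (simp add: Gm_def DERIV_imp_deriv)
  qed (simp add: Gm_def)
  have b1: "bdd_above (range (\<lambda>x. circ_dist (f \<omega> x) (Gm x)))"
    by (rule bdd_aboveI[of _ "1/2"]) (use circ_dist_le_half in auto)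
  have b2: "bdd_above (range (\<lambda>x. \<bar>deriv (f \<omega>) x - deriv Gm x\<bar>))"
  proof (rule bdd_aboveI[of _ "L + 1 + Mg"])
    fix y assume "y \<in> range (\<lambda>x. \<bar>deriv (f \<omega>) x - deriv Gm x\<bar>)"
    then obtain x where x: "y = \<bar>deriv (f \<omega>) x - deriv Gm x\<bar>" by auto
    have "\<bar>deriv Gm x\<bar> \<le> 1 + Mg" using gb[of x] by (simp add: dG)
    then show "y \<le> L + 1 + Mg" using x L[of x] by linarith
  qed
  show "circ_dist (f \<omega> x) (if \<omega> 0 = 0 then x + b else g1 x) < \<delta>" for x
  proof -
    have "circ_dist (f \<omega> x) (Gm x) \<le> (SUP x. circ_dist (f \<omega> x) (Gm x))" by (rule cSUP_upper[OF _ b1]) simp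
    then show ?thesis using s1 by (simp add: Gm_def split: if_splits)
  qed
  show "\<bar>deriv (f \<omega>) x - (if \<omega> 0 = 0 then 1 else deriv g1 x)\<bar> < \<delta>" for x
  proof -
    have "\<bar>deriv (f \<omega>) x - deriv Gm x\<bar> \<le> (SUP x. \<bar>deriv (f \<omega>) x - deriv Gm x\<bar>)" by (rule cSUP_upper[OF _ b2]) simp
    then show ?thesis using s2 dG by simp
  qed
qed

lemma mild_skew_holder:
  assumes ms: "mild_skew b g1 \<delta> C \<alpha> f" and om: "\<omega> \<in> Sigma2" "\<omega>' \<in> Sigma2"
    and agree: "\<And>i. \<bar>i\<bar> < int R \<Longrightarrow> \<omega> i = \<omega>' i" and a0: "0 < \<alpha>" and C0: "0 \<le> C"
  shows "circ_dist (f \<omega> x) (f \<omega>' x) \<le> C * (2 powr (-\<alpha>)) ^ R"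
proof -
  have "circ_dist (f \<omega> x) (f \<omega>' x) \<le> C * dSigma \<omega> \<omega>' powr \<alpha>" using ms om unfolding mild_skew_def by blast
  also have "\<dots> \<le> C * (2 powr (-\<alpha>)) ^ R" using dSigma_powr_le[OF agree a0] C0 by (intro mult_left_mono) auto
  finally show ?thesis .
qed

locale skew_setting =
  fixes b a C \<alpha> \<delta> mg Mg \<mu> G :: real and g1 :: "real \<Rightarrow> real" and f :: "(int \<Rightarrow> nat) \<Rightarrow> real \<Rightarrow> real"
  assumes ms: "mild_skew b g1 \<delta> C \<alpha> f"
    and ha: "a > 1" and g: "circle_diffeo g1"
    and l0: "\<forall>x. \<bar>x\<bar> < 1/8 \<longrightarrow> g1 x = a * x"
    and lh: "\<forall>x. \<bar>x - 1/2\<bar> < 1/8 \<longrightarrow> g1 x = 1/2 + (x - 1/2) / a"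
    and gb: "\<And>x. mg \<le> deriv g1 x \<and> deriv g1 x \<le> Mg" and mg0: "0 < mg"
    and mu: "\<mu> = min 1 mg / 2"
    and GG: "Mg + 1 \<le> G" "1 / \<mu> \<le> G" "2 \<le> G"
    and del: "0 < \<delta>" "\<delta> \<le> \<mu>" "\<delta> \<le> 1/10" "\<delta> < 12/100/a - 3/100"
    and a0: "0 < \<alpha>" and C0: "0 \<le> C"
begin

lemma mu_bounds: "0 < \<mu>" "\<mu> \<le> 1/2" using mu mg0 by auto

lemma fibre_bounds:
  assumes om: "\<omega> \<in> Sigma2"
  shows "circle_diffeo (f \<omega>)"
    and "\<And>x. \<mu> \<le> deriv (f \<omega>) x \<and> deriv (f \<omega>) x \<le> G"
    and "\<omega> 0 = 0 \<Longrightarrow> 1 - \<delta> \<le> deriv (f \<omega>) x \<and> deriv (f \<omega>) x \<le> 1 + \<delta>"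
    and "\<omega> 0 \<noteq> 0 \<Longrightarrow> \<bar>x\<bar> < 1/8 \<Longrightarrow> a - \<delta> \<le> deriv (f \<omega>) x \<and> deriv (f \<omega>) x \<le> a + \<delta>"
    and "\<omega> 0 \<noteq> 0 \<Longrightarrow> \<bar>x - 1/2\<bar> < 1/8 \<Longrightarrow> 0 \<le> deriv (f \<omega>) x \<and> deriv (f \<omega>) x \<le> 1/a + \<delta>"
    and "\<And>x. circ_dist (f \<omega> x) (if \<omega> 0 = 0 then x + b else g1 x) < \<delta>"
proof -
  have gb': "\<And>x. 0 \<le> deriv g1 x \<and> deriv g1 x \<le> Mg" using gb mg0 by (meson less_eq_real_def order_trans)
  note E = mild_skew_fibre_close[OF ms om g gb']
  show "circle_diffeo (f \<omega>)" by (rule E(1))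
  show "circ_dist (f \<omega> x) (if \<omega> 0 = 0 then x + b else g1 x) < \<delta>" for x by (rule E(2))
  have dpos: "0 < deriv (f \<omega>) x" for x using E(1) by (simp add: circle_diffeo_def)
  show "\<mu> \<le> deriv (f \<omega>) x \<and> deriv (f \<omega>) x \<le> G" for x
  proof (cases "\<omega> 0 = 0")
    case True
    then show ?thesis using E(3)[of x] mu del GG mu_bounds by (simp add: abs_less_iff; linarith)
  next
    case False
    then show ?thesis using E(3)[of x] gb[of x] mu del GG mu_bounds by (simp add: abs_less_iff; linarith)
  qed
  show "\<omega> 0 = 0 \<Longrightarrow> 1 - \<delta> \<le> deriv (f \<omega>) x \<and> deriv (f \<omega>) x \<le> 1 + \<delta>"
    using E(3)[of x] by (simp add: abs_less_iff; linarith)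
  show "a - \<delta> \<le> deriv (f \<omega>) x \<and> deriv (f \<omega>) x \<le> a + \<delta>" if "\<omega> 0 \<noteq> 0" "\<bar>x\<bar> < 1/8"
    using E(3)[of x] g1_deriv_near_0[OF l0 that(2)] that(1) by (simp add: abs_less_iff; linarith)
  show "0 \<le> deriv (f \<omega>) x \<and> deriv (f \<omega>) x \<le> 1/a + \<delta>" if "\<omega> 0 \<noteq> 0" "\<bar>x - 1/2\<bar> < 1/8"
    using E(3)[of x] g1_deriv_near_half[OF _ lh that(2)] ha that(1) dpos[of x] by (simp add: abs_less_iff; linarith)
qed

lemma contraction_rate_bounds: "0 \<le> 2 powr (-\<alpha>)" "2 powr (-\<alpha>) \<le> (1::real)"
  using a0 by (auto intro: order_trans[OF powr_mono[of "-\<alpha>" 0 2]])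

lemma fibre_circ_dist_bounds:
  assumes om: "\<omega> \<in> Sigma2"
  shows "circ_dist (f \<omega> x) (f \<omega> y) \<le> G * circ_dist x y"
    and "\<mu> * circ_dist x y \<le> circ_dist (f \<omega> x) (f \<omega> y)"
    and "circ_dist x y \<le> G * circ_dist (f \<omega> x) (f \<omega> y)"
proof -
  note F = fibre_bounds[OF om]
  note D = degree_one_circ_dist_bounds[OF circle_diffeo_degree_one[OF F(1)] circle_diffeo_has_deriv[OF F(1)] F(2)]
  show "circ_dist (f \<omega> x) (f \<omega> y) \<le> G * circ_dist x y" using D mu_bounds by auto
  show lo: "\<mu> * circ_dist x y \<le> circ_dist (f \<omega> x) (f \<omega> y)" using D mu_bounds by auto
  have "circ_dist x y \<le> (1/\<mu>) * circ_dist (f \<omega> x) (f \<omega> y)" using lo mu_bounds by (simp add: field_simps)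
  also have "\<dots> \<le> G * circ_dist (f \<omega> x) (f \<omega> y)" using GG circ_dist_nonneg by (intro mult_right_mono) auto
  finally show "circ_dist x y \<le> G * circ_dist (f \<omega> x) (f \<omega> y)" .
qed

lemma fibre_zero_symbol:
  assumes om: "\<omega> \<in> Sigma2" and z: "\<omega> 0 = 0"
  shows "circ_dist (f \<omega> x) (x + b) \<le> \<delta>"
    and "circ_dist (f \<omega> x) (f \<omega> y) \<le> (1 + \<delta>) * circ_dist x y"
    and "(1 - \<delta>) * circ_dist x y \<le> circ_dist (f \<omega> x) (f \<omega> y)"
proof -
  note F = fibre_bounds[OF om]
  show "circ_dist (f \<omega> x) (x + b) \<le> \<delta>" using F(6)[of x] z by simp
  have "\<And>u. 1 - \<delta> \<le> deriv (f \<omega>) u \<and> deriv (f \<omega>) u \<le> 1 + \<delta>" using F(3) z by blast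
  note D = degree_one_circ_dist_bounds[OF circle_diffeo_degree_one[OF F(1)] circle_diffeo_has_deriv[OF F(1)] this]
  show "circ_dist (f \<omega> x) (f \<omega> y) \<le> (1 + \<delta>) * circ_dist x y"
    and "(1 - \<delta>) * circ_dist x y \<le> circ_dist (f \<omega> x) (f \<omega> y)" using D del by auto
qed

lemma fibre_expanding_near_0:
  assumes om: "\<omega> \<in> Sigma2" and one: "\<omega> 0 = 1" and x: "circ_dist x 0 < 3/100" and y: "circ_dist y 0 < 3/100"
  shows "(a - \<delta>) * circ_dist x y \<le> circ_dist (f \<omega> x) (f \<omega> y)"
proof -
  note F = fibre_bounds[OF om]
  have bd: "\<And>z. \<bar>z - 0\<bar> < 1/8 \<Longrightarrow> a - \<delta> \<le> deriv (f \<omega>) z \<and> deriv (f \<omega>) z \<le> a + \<delta>"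
    using F(4) one by simp
  have "0 \<le> a - \<delta>" using ha del by simp
  from degree_one_local_circ_dist_bounds(2)[OF circle_diffeo_degree_one[OF F(1)] circle_diffeo_has_deriv[OF F(1)]
      bd this x y]
  show ?thesis using g1_slope_bound[OF ha g l0 lh] del by simp
qed

text \<open>Near the attractor, \<open>f\<^sub>\<omega>\<close> can only map a point close to \<open>1/2\<close> if the point itself is
  close to \<open>1/2\<close>, since \<open>g\<^sub>1\<close> keeps points at distance \<open>12/100\<close> from \<open>1/2\<close> at distance \<open>12/(100a)\<close>.\<close>

lemma fibre_contracting_near_half:
  assumes om: "\<omega> \<in> Sigma2" and one: "\<omega> 0 = 1"
    and x: "circ_dist (f \<omega> x) (1/2) < 3/100" and y: "circ_dist (f \<omega> y) (1/2) < 3/100"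
  shows "circ_dist (f \<omega> x) (f \<omega> y) \<le> (1/a + \<delta>) * circ_dist x y"
proof -
  note F = fibre_bounds[OF om]
  have near: "circ_dist u (1/2) < 12/100" if u: "circ_dist (f \<omega> u) (1/2) < 3/100" for u
  proof (rule ccontr)
    assume "\<not> circ_dist u (1/2) < 12/100"
    then have "12/100/a \<le> circ_dist (g1 u) (1/2)" using g1_far_from_half[OF ha g l0 lh] by simp
    moreover have "circ_dist (g1 u) (1/2) \<le> circ_dist (f \<omega> u) (g1 u) + circ_dist (f \<omega> u) (1/2)"
      using circ_dist_triangle[of "g1 u" "1/2" "f \<omega> u"] circ_dist_commute by simp
    moreover have "circ_dist (f \<omega> u) (g1 u) < \<delta>" using F(6)[of u] one by simp
    ultimately show False using u del by linarith
  qed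
  have "\<And>z. \<bar>z - 1/2\<bar> < 1/8 \<Longrightarrow> 0 \<le> deriv (f \<omega>) z \<and> deriv (f \<omega>) z \<le> 1/a + \<delta>" using F(5) one by simp
  then show ?thesis
    by (rule degree_one_local_circ_dist_bounds(1)[OF circle_diffeo_degree_one[OF F(1)] circle_diffeo_has_deriv[OF F(1)]
        _ _ near[OF x] near[OF y]]) auto
qed

lemma fibre_same_symbol_close:
  assumes om: "\<omega> \<in> Sigma2" "\<omega>' \<in> Sigma2" and eq: "\<omega> 0 = \<omega>' 0"
  shows "circ_dist (f \<omega> z) (f \<omega>' z) \<le> 2 * \<delta>"
proof -
  define g where "g = (if \<omega> 0 = 0 then z + b else g1 z)"
  have "circ_dist (f \<omega> z) g < \<delta>" "circ_dist (f \<omega>' z) g < \<delta>"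
    using fibre_bounds(6)[OF om(1), of z] fibre_bounds(6)[OF om(2), of z] eq by (simp_all add: g_def)
  then show ?thesis using circ_dist_triangle[of "f \<omega> z" "f \<omega>' z" g] circ_dist_commute[of g "f \<omega>' z"] by linarith
qed

lemma fibre_holder:
  assumes "\<omega> \<in> Sigma2" "\<omega>' \<in> Sigma2" and "\<And>i. \<bar>i\<bar> < int R \<Longrightarrow> \<omega> i = \<omega>' i"
  shows "circ_dist (f \<omega> z) (f \<omega>' z) \<le> C * (2 powr (-\<alpha>)) ^ R"
  by (rule mild_skew_holder[OF ms assms a0 C0])

lemma delta_factors: "1 \<le> (1 + 2*\<delta>) * (1 - \<delta>)" "(1 - 2*\<delta>) * (1 + \<delta>) \<le> 1"
proof -
  have "0 \<le> \<delta> * (1 - 2*\<delta>)" "0 \<le> \<delta> * (1 + 2*\<delta>)" using del by auto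
  then show "1 \<le> (1 + 2*\<delta>) * (1 - \<delta>)" "(1 - 2*\<delta>) * (1 + \<delta>) \<le> 1" by (simp_all add: algebra_simps)
qed

lemma forward_cocycle:
  "symbolic_cocycle (\<lambda>\<omega> s. f (shift (int s) \<omega>)) int G b 0 \<delta> (2*\<delta>) (a - \<delta>) (2/\<mu>) (C/\<mu>) (2 powr (-\<alpha>))"
proof unfold_locales
  show "1 \<le> G" "1 + 2 * \<delta> \<le> G" "0 \<le> 2 * \<delta>" "2 * \<delta> \<le> 1" "0 \<le> \<delta>" using GG del by auto
  show "0 \<le> 2 / \<mu>" "0 \<le> C / \<mu>" using mu_bounds C0 by auto
  show "0 \<le> 2 powr (-\<alpha>)" "2 powr (-\<alpha>) \<le> (1::real)" by (rule contraction_rate_bounds)+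
next
  fix \<omega> :: "int \<Rightarrow> nat" and s :: nat and x y :: real
  assume "\<omega> \<in> Sigma2"
  then have om: "shift (int s) \<omega> \<in> Sigma2" by (rule shift_Sigma2)
  have sym: "shift (int s) \<omega> 0 = \<omega> (int s)" by (rule shift_at_0)
  show "circ_dist (f (shift (int s) \<omega>) x) (f (shift (int s) \<omega>) y) \<le> G * circ_dist x y"
    and "circ_dist x y \<le> G * circ_dist (f (shift (int s) \<omega>) x) (f (shift (int s) \<omega>) y)"
    using fibre_circ_dist_bounds[OF om] by auto
  show "\<omega> (int s) = 1 \<Longrightarrow> circ_dist x 0 < 3/100 \<Longrightarrow> circ_dist y 0 < 3/100 \<Longrightarrow>
      (a - \<delta>) * circ_dist x y \<le> circ_dist (f (shift (int s) \<omega>) x) (f (shift (int s) \<omega>) y)"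
    using fibre_expanding_near_0[OF om] sym by simp
  assume "\<omega> (int s) = 0"
  note Z = fibre_zero_symbol[OF om, unfolded sym, OF this]
  show "circ_dist (f (shift (int s) \<omega>) x) (x + b) \<le> \<delta>" by (rule Z(1))
  show "circ_dist (f (shift (int s) \<omega>) x) (f (shift (int s) \<omega>) y) \<le> (1 + 2 * \<delta>) * circ_dist x y"
    using Z(2)[of x y] del circ_dist_nonneg[of x y] by (smt (verit) mult_right_mono)
  show "(1 - 2 * \<delta>) * circ_dist x y \<le> circ_dist (f (shift (int s) \<omega>) x) (f (shift (int s) \<omega>) y)"
    using Z(3)[of x y] del circ_dist_nonneg[of x y] by (smt (verit) mult_right_mono)
next
  fix \<omega> \<omega>' :: "int \<Rightarrow> nat" and s :: nat and z :: real
  assume "\<omega> \<in> Sigma2" "\<omega>' \<in> Sigma2" and "\<omega> (int s) = \<omega>' (int s)"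
  then have "circ_dist (f (shift (int s) \<omega>) z) (f (shift (int s) \<omega>') z) \<le> 2 * \<delta>"
    by (intro fibre_same_symbol_close shift_Sigma2) (simp_all add: shift_at_0)
  also have "\<dots> \<le> 2 / \<mu> * \<delta>" using mu_bounds del by (simp add: field_simps)
  finally show "circ_dist (f (shift (int s) \<omega>) z) (f (shift (int s) \<omega>') z) \<le> 2 / \<mu> * \<delta>" .
next
  fix \<omega> \<omega>' :: "int \<Rightarrow> nat" and t s :: nat and z :: real
  assume om: "\<omega> \<in> Sigma2" "\<omega>' \<in> Sigma2" and ag: "\<forall>i. - int t \<le> i \<and> i < int t \<longrightarrow> \<omega> i = \<omega>' i" and st: "s < t"
  have "shift (int s) \<omega> i = shift (int s) \<omega>' i" if "\<bar>i\<bar> < int (t - s)" for i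
    using ag that st by (simp add: shift_def abs_less_iff)
  then have "circ_dist (f (shift (int s) \<omega>) z) (f (shift (int s) \<omega>') z) \<le> C * (2 powr (-\<alpha>)) ^ (t - s)"
    by (intro fibre_holder shift_Sigma2 om)
  also have "\<dots> \<le> C * (2 powr (-\<alpha>)) ^ (t - Suc s)"
    using C0 contraction_rate_bounds by (intro mult_left_mono power_decreasing) auto
  also have "\<dots> \<le> C / \<mu> * (2 powr (-\<alpha>)) ^ (t - Suc s)"
    using C0 mu_bounds contraction_rate_bounds by (intro mult_right_mono) (auto simp: field_simps mult_left_le)
  finally show "circ_dist (f (shift (int s) \<omega>) z) (f (shift (int s) \<omega>') z) \<le> C / \<mu> * (2 powr (-\<alpha>)) ^ (t - Suc s)" .
next
  fix s t :: nat assume "s < t"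
  then show "- int t \<le> int s \<and> int s < int t" by simp
qed

lemma backward_cocycle:
  "symbolic_cocycle (\<lambda>\<omega> s. inv (f (shift (- int s - 1) \<omega>))) (\<lambda>s. - int s - 1) G (-b) (1/2) \<delta> (2*\<delta>)
     (1 / (1/a + \<delta>)) (2/\<mu>) (C/\<mu>) (2 powr (-\<alpha>))"
proof unfold_locales
  show "1 \<le> G" "1 + 2 * \<delta> \<le> G" "0 \<le> 2 * \<delta>" "2 * \<delta> \<le> 1" "0 \<le> \<delta>" using GG del by auto
  show "0 \<le> 2 / \<mu>" "0 \<le> C / \<mu>" using mu_bounds C0 by auto
  show "0 \<le> 2 powr (-\<alpha>)" "2 powr (-\<alpha>) \<le> (1::real)" by (rule contraction_rate_bounds)+
next
  fix \<omega> :: "int \<Rightarrow> nat" and s :: nat and x y :: real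
  assume "\<omega> \<in> Sigma2"
  define \<omega>1 where "\<omega>1 = shift (- int s - 1) \<omega>"
  have om: "\<omega>1 \<in> Sigma2" using \<open>\<omega> \<in> Sigma2\<close> by (simp add: \<omega>1_def shift_Sigma2)
  have sym: "\<omega>1 0 = \<omega> (- int s - 1)" by (simp add: \<omega>1_def shift_at_0)
  define p where "p = inv (f \<omega>1) x"
  define q where "q = inv (f \<omega>1) y"
  have fp: "f \<omega>1 p = x" "f \<omega>1 q = y" using circle_diffeo_f_inv[OF fibre_bounds(1)[OF om]] by (simp_all add: p_def q_def)
  have H: "inv (f (shift (- int s - 1) \<omega>)) x = p" "inv (f (shift (- int s - 1) \<omega>)) y = q"
    by (simp_all add: p_def q_def \<omega>1_def)
  show "circ_dist (inv (f (shift (- int s - 1) \<omega>)) x) (inv (f (shift (- int s - 1) \<omega>)) y) \<le> G * circ_dist x y"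
    and "circ_dist x y \<le> G * circ_dist (inv (f (shift (- int s - 1) \<omega>)) x) (inv (f (shift (- int s - 1) \<omega>)) y)"
    unfolding H using fibre_circ_dist_bounds[OF om, of p q] fp by auto
  show "\<omega> (- int s - 1) = 1 \<Longrightarrow> circ_dist x (1/2) < 3/100 \<Longrightarrow> circ_dist y (1/2) < 3/100 \<Longrightarrow>
      1 / (1/a + \<delta>) * circ_dist x y \<le> circ_dist (inv (f (shift (- int s - 1) \<omega>)) x) (inv (f (shift (- int s - 1) \<omega>)) y)"
  proof -
    assume "\<omega> (- int s - 1) = 1" "circ_dist x (1/2) < 3/100" "circ_dist y (1/2) < 3/100"
    then have "circ_dist x y \<le> (1/a + \<delta>) * circ_dist p q"
      using fibre_contracting_near_half[OF om, of p q] fp sym by simp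
    moreover have "0 < 1/a + \<delta>" using ha del by simp
    ultimately show ?thesis unfolding H by (simp add: field_simps)
  qed
  assume "\<omega> (- int s - 1) = 0"
  note Z = fibre_zero_symbol[OF om, unfolded sym, OF this]
  have "circ_dist p (x + - b) = circ_dist (f \<omega>1 p) (p + b)"
    using circ_dist_translate[of p b "x + - b"] fp circ_dist_commute by simp
  then show "circ_dist (inv (f (shift (- int s - 1) \<omega>)) x) (x + - b) \<le> \<delta>" unfolding H using Z(1) by simp
  have "circ_dist p q \<le> ((1 + 2*\<delta>) * (1 - \<delta>)) * circ_dist p q"
    using mult_right_mono[OF delta_factors(1) circ_dist_nonneg[of p q]] by simp
  also have "\<dots> \<le> (1 + 2*\<delta>) * circ_dist x y"
    using Z(3)[of p q] fp del by (simp add: mult.assoc mult_left_mono)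
  finally show "circ_dist (inv (f (shift (- int s - 1) \<omega>)) x) (inv (f (shift (- int s - 1) \<omega>)) y) \<le> (1 + 2 * \<delta>) * circ_dist x y"
    unfolding H .
  have "(1 - 2*\<delta>) * circ_dist x y \<le> ((1 - 2*\<delta>) * (1 + \<delta>)) * circ_dist p q"
    using Z(2)[of p q] fp del by (simp add: mult.assoc mult_left_mono)
  also have "\<dots> \<le> circ_dist p q" using mult_right_mono[OF delta_factors(2) circ_dist_nonneg[of p q]] by simp
  finally show "(1 - 2 * \<delta>) * circ_dist x y \<le> circ_dist (inv (f (shift (- int s - 1) \<omega>)) x) (inv (f (shift (- int s - 1) \<omega>)) y)"
    unfolding H .
next
  fix \<omega> \<omega>' :: "int \<Rightarrow> nat" and s :: nat and z :: real
  assume om: "\<omega> \<in> Sigma2" "\<omega>' \<in> Sigma2" and "\<omega> (- int s - 1) = \<omega>' (- int s - 1)"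
  then have "circ_dist (f (shift (- int s - 1) \<omega>) w) (f (shift (- int s - 1) \<omega>') w) \<le> 2 * \<delta>" for w
    by (intro fibre_same_symbol_close shift_Sigma2) (simp_all add: shift_at_0)
  then show "circ_dist (inv (f (shift (- int s - 1) \<omega>)) z) (inv (f (shift (- int s - 1) \<omega>')) z) \<le> 2 / \<mu> * \<delta>"
    using inv_circ_dist_close[OF fibre_bounds(1) fibre_bounds(1) fibre_circ_dist_bounds(2) mu_bounds(1)]
      shift_Sigma2[OF om(1)] shift_Sigma2[OF om(2)] by simp
next
  fix \<omega> \<omega>' :: "int \<Rightarrow> nat" and t s :: nat and z :: real
  assume om: "\<omega> \<in> Sigma2" "\<omega>' \<in> Sigma2" and ag: "\<forall>i. - int t \<le> i \<and> i < int t \<longrightarrow> \<omega> i = \<omega>' i" and st: "s < t"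
  have "shift (- int s - 1) \<omega> i = shift (- int s - 1) \<omega>' i" if "\<bar>i\<bar> < int (t - Suc s)" for i
    using ag that st by (simp add: shift_def abs_less_iff)
  then have "circ_dist (f (shift (- int s - 1) \<omega>) w) (f (shift (- int s - 1) \<omega>') w) \<le> C * (2 powr (-\<alpha>)) ^ (t - Suc s)" for w
    by (intro fibre_holder shift_Sigma2 om)
  then show "circ_dist (inv (f (shift (- int s - 1) \<omega>)) z) (inv (f (shift (- int s - 1) \<omega>')) z) \<le> C / \<mu> * (2 powr (-\<alpha>)) ^ (t - Suc s)"
    using inv_circ_dist_close[OF fibre_bounds(1) fibre_bounds(1) fibre_circ_dist_bounds(2) mu_bounds(1)]
      shift_Sigma2[OF om(1)] shift_Sigma2[OF om(2)] by simp
next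
  fix s t :: nat assume "s < t"
  then show "- int t \<le> - int s - 1 \<and> - int s - 1 < int t" by simp
qed

end

section \<open>Words with isolated ones\<close>

definition cycle_pattern :: "nat \<Rightarrow> (nat \<Rightarrow> nat option) \<Rightarrow> nat \<Rightarrow> nat" where
  "cycle_pattern P p s = (case p (s div P) of None \<Rightarrow> 0 | Some k \<Rightarrow> if s mod P = k then 1 else 0)"

definition padded_word :: "(int \<Rightarrow> nat) \<Rightarrow> nat \<Rightarrow> nat \<Rightarrow> (nat \<Rightarrow> nat option) \<Rightarrow> (nat \<Rightarrow> nat option) \<Rightarrow> int \<Rightarrow> nat" where
  "padded_word w n P pf pb i = (if - int n \<le> i \<and> i < int n then w i
     else if int n \<le> i then cycle_pattern P pf (nat i - n) else cycle_pattern P pb (nat (- i - 1) - n))"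

lemma cycle_pattern_at: "0 < P \<Longrightarrow> i < P \<Longrightarrow> cycle_pattern P p (j * P + i) = (if p j = Some i then 1 else 0)"
  by (auto simp: cycle_pattern_def split: option.splits)

lemma padded_word_fwd: "0 < P \<Longrightarrow> i < P \<Longrightarrow> padded_word w n P pf pb (int (n + j * P + i)) = (if pf j = Some i then 1 else 0)"
proof -
  assume P: "0 < P" "i < P"
  have c2: "int n \<le> int (n + j * P + i)" by (simp only: of_nat_le_iff; simp)
  then have c1: "\<not> (- int n \<le> int (n + j * P + i) \<and> int (n + j * P + i) < int n)" by linarith
  have e: "nat (int (n + j * P + i)) - n = j * P + i" by (simp only: nat_int; simp)
  show ?thesis unfolding padded_word_def using c1 c2 e P by (simp only: if_False if_True) (simp add: cycle_pattern_at)
qed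

lemma padded_word_bwd: "0 < P \<Longrightarrow> i < P \<Longrightarrow> padded_word w n P pf pb (- int (n + j * P + i) - 1) = (if pb j = Some i then 1 else 0)"
proof -
  assume P: "0 < P" "i < P"
  have e0: "- (- int (n + j * P + i) - 1) - 1 = int (n + j * P + i)" by simp
  have e: "nat (- (- int (n + j * P + i) - 1) - 1) - n = j * P + i" unfolding e0 by (simp only: nat_int; simp)
  have c0: "int n \<le> int (n + j * P + i)" by (simp only: of_nat_le_iff; simp)
  then have c1: "\<not> (- int n \<le> - int (n + j * P + i) - 1 \<and> - int (n + j * P + i) - 1 < int n)" by linarith
  have c2: "\<not> int n \<le> - int (n + j * P + i) - 1" using c0 by linarith
  show ?thesis unfolding padded_word_def using c1 c2 e P by (simp only: if_False if_True) (simp add: cycle_pattern_at)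
qed

lemma padded_word_centre: "- int n \<le> i \<Longrightarrow> i < int n \<Longrightarrow> padded_word w n P pf pb i = w i"
  by (simp add: padded_word_def)

lemma cycle_pattern_le_1: "cycle_pattern P p s \<le> Suc 0"
  by (auto simp: cycle_pattern_def split: option.splits)

lemma padded_word_Sigma2: "(\<forall>i. - int n \<le> i \<and> i < int n \<longrightarrow> w i \<le> 1) \<Longrightarrow> padded_word w n P pf pb \<in> Sigma2"
  unfolding Sigma2_def padded_word_def using cycle_pattern_le_1 by auto

lemma cycle_pattern_agree:
  assumes "\<forall>j<N. p' j = p j" "s < N * P" "0 < P"
  shows "cycle_pattern P p' s = cycle_pattern P p s"
proof -
  have "s div P < N" using assms(2,3) by (simp add: div_less_iff_less_mult)
  then show ?thesis using assms(1) by (simp add: cycle_pattern_def)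
qed

lemma padded_word_agree:
  assumes "\<forall>j<N. pf' j = pf j \<and> pb' j = pb j" "0 < P"
    and "- int (n + N * P) \<le> i" "i < int (n + N * P)"
  shows "padded_word w n P pf' pb' i = padded_word w n P pf pb i"
proof -
  have a1: "\<forall>j<N. pf' j = pf j" "\<forall>j<N. pb' j = pb j" using assms(1) by auto
  show ?thesis
  proof (cases "- int n \<le> i \<and> i < int n")
    case True then show ?thesis by (simp add: padded_word_def)
  next
    case False
    show ?thesis
    proof (cases "int n \<le> i")
      case True
      have "nat i - n < N * P" using True assms(4) by linarith
      then show ?thesis using False True cycle_pattern_agree[OF a1(1) _ assms(2)] by (simp add: padded_word_def)
    next
      case F2: False
      have h1: "- i - 1 < int (n + N * P)" using assms(3) by linarith
      have h0: "0 \<le> - i - 1" using F2 False by linarith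
      have "nat (- i - 1) < nat (int (n + N * P))" using nat_less_eq_zless[OF h0] h1 by blast
      then have "nat (- i - 1) < n + N * P" by (simp only: nat_int)
      moreover have "n \<le> nat (- i - 1)" using F2 False by linarith
      ultimately have "nat (- i - 1) - n < N * P" by arith
      then show ?thesis using False F2 cycle_pattern_agree[OF a1(2) _ assms(2)] by (simp add: padded_word_def)
    qed
  qed
qed

lemma zero_blocks_geI:
  fixes u :: "int \<Rightarrow> nat" and lo hi :: int
  assumes hl: "lo + int T \<le> hi"
    and ones: "\<And>p. lo \<le> p \<Longrightarrow> p < hi \<Longrightarrow> u p \<noteq> 0 \<Longrightarrow>
        lo + int T \<le> p \<and> p + int T < hi \<and> (\<forall>q. p < q \<and> q \<le> p + int T \<longrightarrow> u q = 0)"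
  shows "zero_blocks_ge T u lo hi"
  unfolding zero_blocks_ge_def
proof (intro allI impI)
  fix i j assume h: "lo \<le> i \<and> i \<le> j \<and> j < hi \<and> (\<forall>k. i \<le> k \<and> k \<le> j \<longrightarrow> u k = 0)
        \<and> (i = lo \<or> u (i - 1) \<noteq> 0) \<and> (j = hi - 1 \<or> u (j + 1) \<noteq> 0)"
  show "int T \<le> j - i + 1"
  proof (cases "i = lo")
    case True
    show ?thesis
    proof (cases "j = hi - 1")
      case True then show ?thesis using \<open>i = lo\<close> hl by simp
    next
      case False
      then have u1: "u (j + 1) \<noteq> 0" using h by auto
      have "j + 1 < hi" using h False by auto
      then have "lo + int T \<le> j + 1" using ones[of "j + 1"] u1 h by auto
      then show ?thesis using \<open>i = lo\<close> by simp
    qed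
  next
    case False
    then have u1: "u (i - 1) \<noteq> 0" using h by auto
    have "lo \<le> i - 1" "i - 1 < hi" using h False by auto
    then have o: "i - 1 + int T < hi" "\<forall>q. i - 1 < q \<and> q \<le> i - 1 + int T \<longrightarrow> u q = 0"
      using ones[of "i - 1"] u1 by auto
    show ?thesis
    proof (rule ccontr)
      assume "\<not> int T \<le> j - i + 1"
      then have jl: "j + 1 \<le> i - 1 + int T" by simp
      show False
      proof (cases "j = hi - 1")
        case True then show False using jl o(1) by simp
      next
        case F: False
        then have "u (j + 1) \<noteq> 0" using h by auto
        moreover have "u (j + 1) = 0" using o(2) jl h by auto
        ultimately show False by simp
      qed
    qed
  qed
qed

lemma padded_position_fwd:
  assumes "int n \<le> p" "p < int (n + N * P)" "0 < P"
  shows "\<exists>j k. j < N \<and> k < P \<and> p = int (n + j * P + k)"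
proof -
  define s where "s = nat p - n"
  have ps: "p = int (n + s)" using assms(1) by (simp add: s_def)
  have p0: "0 \<le> p" using assms(1) by linarith
  have "nat p < nat (int (n + N * P))" using nat_less_eq_zless[OF p0] assms(2) by blast
  then have "nat p < n + N * P" by (simp only: nat_int)
  moreover have "n \<le> nat p" using assms(1) by linarith
  ultimately have sN: "s < N * P" unfolding s_def by linarith
  have e: "n + s = n + s div P * P + s mod P" by simp
  have "s div P < N" using sN assms(3) by (simp add: div_less_iff_less_mult)
  moreover have "s mod P < P" using assms(3) by simp
  moreover have "p = int (n + s div P * P + s mod P)" using ps e by simp
  ultimately show ?thesis by blast
qed

lemma padded_position_bwd:
  assumes "- int (n + N * P) \<le> p" "p < - int n" "0 < P"
  shows "\<exists>j k. j < N \<and> k < P \<and> p = - int (n + j * P + k) - 1"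
proof -
  have "int n \<le> - p - 1" "- p - 1 < int (n + N * P)" using assms by linarith+
  then obtain j k where "j < N" "k < P" "- p - 1 = int (n + j * P + k)" using padded_position_fwd[OF _ _ assms(3)] by blast
  then show ?thesis by (intro exI[of _ j] exI[of _ k]) simp
qed

definition admissible_slot :: "nat \<Rightarrow> nat \<Rightarrow> nat option \<Rightarrow> bool" where
  "admissible_slot T P p \<longleftrightarrow> p = None \<or> (\<exists>k. p = Some k \<and> T \<le> k \<and> k + T < P)"

lemma zero_blocks_fwd:
  assumes P: "0 < P" "T < P" and N: "1 \<le> N" and v: "\<forall>j<N. admissible_slot T P (pf j)"
  shows "zero_blocks_ge T (padded_word w n P pf pb) (int n) (int (n + N * P))"
proof (rule zero_blocks_geI)
  have "T \<le> N * P" using P N by (metis le_trans less_imp_le mult_1 mult_le_mono1)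
  then have h: "int T \<le> int (N * P)" by (simp only: of_nat_le_iff)
  show "int n + int T \<le> int (n + N * P)" using h by simp
next
  fix p assume p: "int n \<le> p" "p < int (n + N * P)" "padded_word w n P pf pb p \<noteq> 0"
  obtain j k where jk: "j < N" "k < P" "p = int (n + j * P + k)" using padded_position_fwd[OF p(1,2) P(1)] by blast
  have pj: "pf j = Some k" using p(3) padded_word_fwd[OF P(1) jk(2), of w n pf pb j] jk(3) by (auto split: if_splits)
  have kT: "T \<le> k" "k + T < P" using v jk(1) pj by (auto simp: admissible_slot_def)
  have jp: "0 \<le> int j * int P" by simp
  have Tk: "int T \<le> int k" using kT(1) by simp
  have A: "int n + int T \<le> p" using jk(3) jp Tk by (simp only: of_nat_add of_nat_mult; linarith)
  have "n + j * P + k + T < n + (j + 1) * P" using kT by simp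
  also have "\<dots> \<le> n + N * P" using jk(1) by (simp add: mult_le_mono1 del: mult_Suc)
  finally have B: "p + int T < int (n + N * P)" using jk(3) by linarith
  have C: "padded_word w n P pf pb q = 0" if q: "p < q" "q \<le> p + int T" for q
  proof -
    define d where "d = nat (q - p)"
    have d: "q = int (n + j * P + (k + d))" "0 < d" "d \<le> T" using q jk(3) by (auto simp: d_def)
    have kd: "k + d < P" using d kT by simp
    have "padded_word w n P pf pb q = (if pf j = Some (k + d) then 1 else 0)" unfolding d(1) by (rule padded_word_fwd[OF P(1) kd])
    then show ?thesis using pj d by simp
  qed
  show "int n + int T \<le> p \<and> p + int T < int (n + N * P) \<and> (\<forall>q. p < q \<and> q \<le> p + int T \<longrightarrow> padded_word w n P pf pb q = 0)"
    using A B C by blast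
qed

lemma zero_blocks_bwd:
  assumes P: "0 < P" "T < P" and N: "1 \<le> N" and v: "\<forall>j<N. admissible_slot T P (pb j)" and T0: "0 < T"
  shows "zero_blocks_ge T (padded_word w n P pf pb) (- int (n + N * P)) (- int n)"
proof (rule zero_blocks_geI)
  have "T \<le> N * P" using P N by (metis le_trans less_imp_le mult_1 mult_le_mono1)
  then have h: "int T \<le> int (N * P)" by (simp only: of_nat_le_iff)
  show "- int (n + N * P) + int T \<le> - int n" using h by simp
next
  fix p assume p: "- int (n + N * P) \<le> p" "p < - int n" "padded_word w n P pf pb p \<noteq> 0"
  obtain j k where jk: "j < N" "k < P" "p = - int (n + j * P + k) - 1" using padded_position_bwd[OF p(1,2) P(1)] by blast
  have pj: "pb j = Some k" using p(3) padded_word_bwd[OF P(1) jk(2), of w n pf pb j] jk(3) by (auto split: if_splits)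
  have kT: "T \<le> k" "k + T < P" using v jk(1) pj by (auto simp: admissible_slot_def)
  have "n + j * P + k + T < n + (j + 1) * P" using kT by simp
  also have "\<dots> \<le> n + N * P" using jk(1) by (simp add: mult_le_mono1 del: mult_Suc)
  finally have A: "- int (n + N * P) + int T \<le> p" using jk(3) by linarith
  have jp: "0 \<le> int j * int P" by simp
  have Tk: "int T \<le> int k" using kT(1) by simp
  have B: "p + int T < - int n" using jk(3) jp Tk T0 by (simp only: of_nat_add of_nat_mult; linarith)
  have C: "padded_word w n P pf pb q = 0" if q: "p < q" "q \<le> p + int T" for q
  proof -
    define d where "d = nat (q - p)"
    have d0: "0 < d" "d \<le> T" using q by (auto simp: d_def)
    then have dk: "d \<le> k" using kT by simp
    have "q = p + int d" using q by (simp add: d_def)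
    then have qd: "q = - int (n + j * P + (k - d)) - 1" using jk(3) dk by simp
    have kd: "k - d < P" using jk(2) by simp
    have "padded_word w n P pf pb q = (if pb j = Some (k - d) then 1 else 0)" unfolding qd by (rule padded_word_bwd[OF P(1) kd])
    then show ?thesis using pj d0 dk by simp
  qed
  show "- int (n + N * P) + int T \<le> p \<and> p + int T < - int n \<and> (\<forall>q. p < q \<and> q \<le> p + int T \<longrightarrow> padded_word w n P pf pb q = 0)"
    using A B C by blast
qed

section \<open>The construction\<close>

text \<open>\<open>P\<close> is the cycle length and \<open>K0\<close> the number of rotation steps needed to reach any
  point of the circle up to \<open>b/2\<close>. Over one cycle orbits separate at most by the factor \<open>c\<^sup>P\<close>,
  whereas the Hoelder term decays by the factor \<open>1/r\<^sup>2\<close> with \<open>r = (c\<^sup>P)\<^sup>2\<close>; the last \<open>I\<close>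
  cycles are controlled by \<open>\<delta>\<close>-closeness, the older ones by Hoelder continuity.\<close>

locale construction = skew_setting +
  fixes T P K0 I :: nat and c r \<epsilon> s1 lamc :: real
  assumes T0: "0 < T" and bpos: "0 < b" and bsmall: "b < 1/100"
    and K0: "K0 = nat \<lceil>1/b\<rceil>"
    and PT: "2*T + K0 + 1 \<le> P"
    and cdef: "c = 2 powr (\<alpha>/4)" and Gc: "G \<le> c ^ P" and rdef: "r = (c ^ P)\<^sup>2"
    and c_ge: "1 + 2*\<delta> \<le> c"
    and eps: "\<epsilon> = 1/10000" and s1: "s1 = 2*b + 1/1000"
    and head: "real I * (r ^ I * (real P * (2/\<mu> * \<delta>))) \<le> \<epsilon>/3"
    and tail: "real P * (C/\<mu>) * r\<^sup>2 * (1/2) ^ I \<le> \<epsilon>/3"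
    and lamc: "lamc = (1+a)/2" "lamc \<le> a - \<delta>" "lamc \<le> 1/(1/a + \<delta>)"
    and rate_condition: "1 < lamc * (1 - 2*\<delta>) ^ P"
    and budget_condition: "b/2 + \<epsilon> + real (T+K0) * \<delta> + (1+2*\<delta>) ^ (T+K0) * (s1 + 2*\<epsilon>) < 3/100"
    and target_condition: "2*b \<le> (1-2*\<delta>) ^ P * (s1 - 2*\<epsilon>) - \<epsilon>"

sublocale construction \<subseteq> F: symbolic_cocycle "\<lambda>\<omega> s. f (shift (int s) \<omega>)" int G b 0 \<delta> "2*\<delta>" "a - \<delta>" "2/\<mu>" "C/\<mu>" "2 powr (-\<alpha>)"
  by (rule forward_cocycle)

sublocale construction \<subseteq> B: symbolic_cocycle "\<lambda>\<omega> s. inv (f (shift (- int s - 1) \<omega>))" "\<lambda>s. - int s - 1" G "-b" "1/2" \<delta> "2*\<delta>" "1 / (1/a + \<delta>)" "2/\<mu>" "C/\<mu>" "2 powr (-\<alpha>)"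
  by (rule backward_cocycle)

context construction
begin

lemma period_facts: "0 < P" "T < P" "\<And>k. k \<le> T + K0 \<Longrightarrow> k + T < P"
  using PT T0 by auto

lemma rate_facts: "2 \<le> r" "(2 powr (-\<alpha>)) ^ P = 1 / r\<^sup>2" "0 \<le> G * (1 + 2*\<delta>) ^ P" "G * (1 + 2*\<delta>) ^ P \<le> r"
proof -
  have cP: "c ^ P = 2 powr (\<alpha>/4 * real P)"
    using cdef by (simp add: powr_realpow[symmetric] powr_powr)
  have "2 \<le> c ^ P" using Gc GG by linarith
  then have "2 * 2 \<le> c ^ P * c ^ P" by (intro mult_mono) auto
  then show "2 \<le> r" using rdef by (simp add: power2_eq_square)
  have "r\<^sup>2 = 2 powr (\<alpha> * real P)"
  proof -
    have "r\<^sup>2 = (c ^ P) ^ 4" using rdef by (simp add: power_mult[symmetric] mult.commute)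
    also have "\<dots> = 2 powr (\<alpha>/4 * real P * 4)" unfolding cP by (simp add: powr_realpow[symmetric] powr_powr)
    finally show ?thesis by simp
  qed
  moreover have "(2 powr (-\<alpha>)) ^ P = 2 powr (- (\<alpha> * real P))" by (simp add: powr_realpow[symmetric] powr_powr)
  ultimately show "(2 powr (-\<alpha>)) ^ P = 1 / r\<^sup>2" by (simp add: powr_minus divide_inverse)
  show "0 \<le> G * (1 + 2*\<delta>) ^ P" using GG del by simp
  have "(1 + 2*\<delta>) ^ P \<le> c ^ P" using c_ge del by (intro power_mono) auto
  then have "G * (1 + 2*\<delta>) ^ P \<le> c ^ P * c ^ P" using Gc GG del by (intro mult_mono) auto
  then show "G * (1 + 2*\<delta>) ^ P \<le> r" using rdef by (simp add: power2_eq_square)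
qed

lemma exists_padding_length: "\<exists>N0. \<forall>N\<ge>N0. G ^ n * real n * (C/\<mu>) * (1/r) ^ N \<le> \<epsilon>/3"
  using rate_facts(1) GG C0 mu_bounds eps by (intro eventually_mult_power_le) auto

lemma orbit_width_le_eps:
  assumes Np: "G ^ n * real n * (C/\<mu>) * (1/r) ^ N \<le> \<epsilon>/3"
    and om: "\<omega> \<in> cylinder (n + N * P) (padded_word w n P pf pb)" "\<omega>' \<in> cylinder (n + N * P) (padded_word w n P pf pb)"
  shows "circ_dist (F.X \<omega> x (n + N * P)) (F.X \<omega>' x (n + N * P)) \<le> \<epsilon>"
    and "circ_dist (B.X \<omega> x (n + N * P)) (B.X \<omega>' x (n + N * P)) \<le> \<epsilon>"
proof -
  have P0: "0 < P" by (rule period_facts(1))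
  define \<Gamma> where "\<Gamma> = G * (1 + 2*\<delta>) ^ P"
  define kP where "kP = (2 powr (-\<alpha>)) ^ P"
  have kPN: "(2 powr (-\<alpha>)) ^ (N * P) = kP ^ N" by (simp add: kP_def power_mult[symmetric] mult.commute)
  have kp: "0 \<le> kP" "kP \<le> 1 / r\<^sup>2" using rate_facts(2) by (auto simp: kP_def)
  have num: "\<Gamma> ^ N * (G ^ n * (real n * (C/\<mu> * kP ^ N)))
     + (\<Sum>j<N. \<Gamma> ^ (N - 1 - j) * (\<Gamma> * (real P * min (2/\<mu> * \<delta>) (C/\<mu> * kP ^ (N - 1 - j)))))
     \<le> \<epsilon>"
  proof -
    have "\<Gamma> ^ N * (G ^ n * (real n * (C/\<mu> * kP ^ N)))
     + (\<Sum>j<N. \<Gamma> ^ (N - 1 - j) * (\<Gamma> * (real P * min (2/\<mu> * \<delta>) (C/\<mu> * kP ^ (N - 1 - j)))))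
     \<le> G ^ n * real n * (C/\<mu>) * (1 / r) ^ N + (real I * (r ^ I * (real P * (2/\<mu> * \<delta>))) + (real P * (C/\<mu>) * r ^ 2) * (1/2) ^ I)"
      by (rule width_arith_bound[OF rate_facts(1) _ _ kp]) (use rate_facts(3,4) GG mu_bounds C0 del in \<open>auto simp: \<Gamma>_def\<close>)
    also have "\<dots> \<le> \<epsilon>/3 + (\<epsilon>/3 + \<epsilon>/3)" using Np head tail by linarith
    finally show ?thesis by simp
  qed
  show "circ_dist (F.X \<omega> x (n + N * P)) (F.X \<omega>' x (n + N * P)) \<le> \<epsilon>"
  proof -
    have fmt: "\<And>j i. j < N \<Longrightarrow> i < P \<Longrightarrow> padded_word w n P pf pb (int (n + j * P + i)) = (if pf j = Some i then 1 else 0)"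
      using padded_word_fwd[OF P0] by blast
    have "circ_dist (F.X \<omega> x (n + N * P)) (F.X \<omega>' x (n + N * P)) \<le> \<Gamma> ^ N * (G ^ n * (real n * (C/\<mu> * (2 powr (-\<alpha>)) ^ (N * P))))
     + (\<Sum>j<N. \<Gamma> ^ (N - 1 - j) * (\<Gamma> * (real P * min (2/\<mu> * \<delta>) (C/\<mu> * ((2 powr (-\<alpha>)) ^ P) ^ (N - 1 - j)))))"
      unfolding \<Gamma>_def by (rule F.orbit_width[OF om fmt])
    then show ?thesis using num unfolding kPN kP_def by linarith
  qed
  show "circ_dist (B.X \<omega> x (n + N * P)) (B.X \<omega>' x (n + N * P)) \<le> \<epsilon>"
  proof -
    have fmt: "\<And>j i. j < N \<Longrightarrow> i < P \<Longrightarrow> padded_word w n P pf pb (- int (n + j * P + i) - 1) = (if pb j = Some i then 1 else 0)"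
      using padded_word_bwd[OF P0] by blast
    have "circ_dist (B.X \<omega> x (n + N * P)) (B.X \<omega>' x (n + N * P)) \<le> \<Gamma> ^ N * (G ^ n * (real n * (C/\<mu> * (2 powr (-\<alpha>)) ^ (N * P))))
     + (\<Sum>j<N. \<Gamma> ^ (N - 1 - j) * (\<Gamma> * (real P * min (2/\<mu> * \<delta>) (C/\<mu> * ((2 powr (-\<alpha>)) ^ P) ^ (N - 1 - j)))))"
      unfolding \<Gamma>_def by (rule B.orbit_width[OF om fmt])
    then show ?thesis using num unfolding kPN kP_def by linarith
  qed
qed

lemma cycle_budget:
  assumes "k \<le> T + K0"
  shows "b/2 + \<epsilon> + real k * \<delta> + (1 + 2*\<delta>) ^ k * (s1 + 2*\<epsilon>) < 3/100"
proof -
  have "real k * \<delta> \<le> real (T + K0) * \<delta>" using assms del by (intro mult_right_mono) auto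
  moreover have "(1 + 2*\<delta>) ^ k * (s1 + 2*\<epsilon>) \<le> (1 + 2*\<delta>) ^ (T + K0) * (s1 + 2*\<epsilon>)"
    using assms del s1 eps bpos by (intro mult_right_mono power_increasing) auto
  ultimately show ?thesis using budget_condition by linarith
qed

end

text \<open>The bound \<open>sep_bound N\<close> on the separation of the two orbits after the first \<open>N\<close> cycles
  decays during the first \<open>Npad\<close> cycles, while the cylinder is still too wide to aim at the
  expanding region, and afterwards grows by the factor \<open>rate > 1\<close> per cycle until it is capped
  at \<open>target\<close>.\<close>

locale separation = construction +
  fixes n :: nat and w :: "int \<Rightarrow> nat" and \<phi>1 \<phi>2 :: real and Npad :: nat
  assumes word01: "\<forall>i. - int n \<le> i \<and> i < int n \<longrightarrow> w i \<le> 1" and distinct: "frac \<phi>1 \<noteq> frac \<phi>2"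
    and padding: "\<And>N. Npad \<le> N \<Longrightarrow> G ^ n * real n * (C/\<mu>) * (1/r) ^ N \<le> \<epsilon>/3"
begin

definition rate :: real where "rate = lamc * (1 - 2*\<delta>) ^ P"

definition target :: real where "target = (1 - 2*\<delta>) ^ P * (s1 - 2*\<epsilon>)"

definition initial_sep :: real where "initial_sep = circ_dist \<phi>1 \<phi>2 / G ^ n"

definition sep_bound :: "nat \<Rightarrow> real" where
  "sep_bound N = (if N < Npad then initial_sep * (1 - 2*\<delta>) ^ (P * N)
     else min target (initial_sep * (1 - 2*\<delta>) ^ (P * Npad) * rate ^ (N - Npad)))"

definition sepF :: "(int \<Rightarrow> nat) \<Rightarrow> nat \<Rightarrow> real" where
  "sepF \<omega> t = circ_dist (F.X \<omega> \<phi>1 t) (F.X \<omega> \<phi>2 t)"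

definition sepB :: "(int \<Rightarrow> nat) \<Rightarrow> nat \<Rightarrow> real" where
  "sepB \<omega> t = circ_dist (B.X \<omega> \<phi>1 t) (B.X \<omega> \<phi>2 t)"

definition separated :: "nat \<Rightarrow> (nat \<Rightarrow> nat option) \<Rightarrow> (nat \<Rightarrow> nat option) \<Rightarrow> bool" where
  "separated N pf pb \<longleftrightarrow> (\<forall>j<N. admissible_slot T P (pf j) \<and> admissible_slot T P (pb j))
     \<and> (\<forall>\<omega>\<in>cylinder (n + N * P) (padded_word w n P pf pb).
          sep_bound N \<le> sepF \<omega> (n + N * P) \<and> sep_bound N \<le> sepB \<omega> (n + N * P))"

text \<open>A symbol \<open>1\<close> is inserted only when the reference orbits are close, so that the expansion
  near the repeller (forward) or the attractor (backward) acts on both points.\<close>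

definition slot :: "nat \<Rightarrow> real \<Rightarrow> real \<Rightarrow> nat \<Rightarrow> nat option" where
  "slot N x y k = (if Npad \<le> N \<and> circ_dist x y < s1 then Some k else None)"

lemma rate_gt_1: "1 < rate"
  using rate_condition by (simp add: rate_def)

lemma target_nonneg: "0 \<le> target"
proof -
  have "0 \<le> s1 - 2*\<epsilon>" using s1 eps bpos by simp
  then show ?thesis using del by (simp add: target_def)
qed

lemma target_ge: "2*b + \<epsilon> \<le> target"
  using target_condition by (simp add: target_def)

lemma rate_le:
  assumes "lamc \<le> l" "0 \<le> z"
  shows "rate * z \<le> l * (1 - 2*\<delta>) ^ (P - 1) * z"
proof -
  have "(1 - 2*\<delta>) ^ P \<le> (1 - 2*\<delta>) ^ (P - 1)" using del by (intro power_decreasing) auto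
  moreover have "0 \<le> lamc" using lamc ha by simp
  ultimately have "lamc * (1 - 2*\<delta>) ^ P \<le> l * (1 - 2*\<delta>) ^ (P - 1)" using assms del by (intro mult_mono) auto
  then show ?thesis unfolding rate_def using assms(2) by (intro mult_right_mono) auto
qed

lemma sep_bound_Suc_le:
  assumes ib: "sep_bound N \<le> s" and s0: "0 \<le> s"
    and early: "N < Npad \<Longrightarrow> (1 - 2*\<delta>) ^ P * s \<le> s'"
    and late: "Npad \<le> N \<Longrightarrow> (s1 - 2*\<epsilon> \<le> s \<and> (1 - 2*\<delta>) ^ P * s \<le> s') \<or> rate * s \<le> s'"
  shows "sep_bound (Suc N) \<le> s'"
proof (cases "N < Npad")
  case True
  have "sep_bound (Suc N) \<le> initial_sep * (1 - 2*\<delta>) ^ (P * Suc N)"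
  proof (cases "Suc N < Npad")
    case False
    then have "Npad = Suc N" using True by simp
    then show ?thesis unfolding sep_bound_def by simp
  qed (simp add: sep_bound_def)
  also have "\<dots> = (1 - 2*\<delta>) ^ P * sep_bound N"
    unfolding sep_bound_def using True by (simp add: power_add mult.commute mult.left_commute)
  also have "\<dots> \<le> (1 - 2*\<delta>) ^ P * s" using ib del by (intro mult_left_mono) auto
  finally show ?thesis using early[OF True] by linarith
next
  case False
  then have "Npad \<le> N" by simp
  have unfold: "sep_bound M = min target (initial_sep * (1 - 2*\<delta>) ^ (P * Npad) * rate ^ (M - Npad))"
    if "Npad \<le> M" for M using that by (simp add: sep_bound_def)
  from late[OF \<open>Npad \<le> N\<close>] show ?thesis
  proof
    assume far: "s1 - 2*\<epsilon> \<le> s \<and> (1 - 2*\<delta>) ^ P * s \<le> s'"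
    have "target \<le> (1 - 2*\<delta>) ^ P * s" unfolding target_def using far del by (intro mult_left_mono) auto
    moreover have "sep_bound (Suc N) \<le> target" using unfold[of "Suc N"] \<open>Npad \<le> N\<close> by simp
    ultimately show ?thesis using far by linarith
  next
    assume grow: "rate * s \<le> s'"
    have "min target (initial_sep * (1 - 2*\<delta>) ^ (P * Npad) * rate ^ Suc (N - Npad)) \<le> rate * s"
      by (rule min_mult_power_Suc_le) (use rate_gt_1 s0 ib target_nonneg unfold[OF \<open>Npad \<le> N\<close>] in auto)
    moreover have "Suc N - Npad = Suc (N - Npad)" using \<open>Npad \<le> N\<close> by simp
    ultimately show ?thesis using grow unfold[of "Suc N"] \<open>Npad \<le> N\<close> by simp
  qed
qed

lemma forward_cycle_keeps_bound:
  assumes om: "\<omega> \<in> cylinder (t + P) \<beta>'" and ib: "sep_bound N \<le> sepF \<omega> t"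
    and pat: "\<And>i. i < P \<Longrightarrow> \<beta>' (int (t + i)) = (if slot N x y k = Some i then 1 else 0)"
    and near: "Npad \<le> N \<Longrightarrow> circ_dist (F.X \<omega> \<phi>1 t) x \<le> \<epsilon> \<and> circ_dist (F.X \<omega> \<phi>2 t) y \<le> \<epsilon>"
    and k: "k \<le> T + K0" "circ_dist (x + real k * b) 0 \<le> b/2"
  shows "sep_bound (Suc N) \<le> sepF \<omega> (t + P)"
proof (rule sep_bound_Suc_le[OF ib])
  show "0 \<le> sepF \<omega> t" by (simp add: sepF_def circ_dist_nonneg)
  have none: "(1 - 2*\<delta>) ^ P * sepF \<omega> t \<le> sepF \<omega> (t + P)" if "slot N x y k = None"
    using F.cycle_without_one[OF om] pat that by (simp add: sepF_def)
  show "N < Npad \<Longrightarrow> (1 - 2*\<delta>) ^ P * sepF \<omega> t \<le> sepF \<omega> (t + P)" by (rule none) (simp add: slot_def)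
  assume late: "Npad \<le> N"
  note near = near[OF late, THEN conjunct1] near[OF late, THEN conjunct2]
  show "(s1 - 2*\<epsilon> \<le> sepF \<omega> t \<and> (1 - 2*\<delta>) ^ P * sepF \<omega> t \<le> sepF \<omega> (t + P)) \<or> rate * sepF \<omega> t \<le> sepF \<omega> (t + P)"
  proof (cases "circ_dist x y < s1")
    case False
    have "circ_dist x (F.X \<omega> \<phi>1 t) \<le> \<epsilon>" "circ_dist y (F.X \<omega> \<phi>2 t) \<le> \<epsilon>"
      using near by (simp_all add: circ_dist_commute)
    then have "circ_dist x y \<le> sepF \<omega> t + \<epsilon> + \<epsilon>" unfolding sepF_def by (rule circ_dist_perturb)
    then show ?thesis using False none by (simp add: slot_def)
  next
    case True
    then have sl: "slot N x y k = Some k" using late by (simp add: slot_def)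
    have kP: "k < P" using period_facts(3)[OF k(1)] by simp
    have sy: "\<beta>' (int (t + i)) = (if i = k then 1 else 0)" if "i < P" for i
      using pat[OF that] sl by auto
    have S: "circ_dist (F.X \<omega> \<phi>1 t) (F.X \<omega> \<phi>2 t) \<le> s1 + 2*\<epsilon>"
      using circ_dist_perturb[OF near] True by linarith
    have lam0: "0 \<le> (a - \<delta>)" using ha del by simp
    have "(a - \<delta>) * (1 - 2*\<delta>) ^ (P - 1) * sepF \<omega> t \<le> sepF \<omega> (t + P)"
      unfolding sepF_def by (rule F.cycle_with_one[OF om kP sy near(1) k(2) S cycle_budget[OF k(1)] lam0])
    moreover have "rate * sepF \<omega> t \<le> (a - \<delta>) * (1 - 2*\<delta>) ^ (P - 1) * sepF \<omega> t"
      by (rule rate_le[OF lamc(2)]) (simp add: sepF_def circ_dist_nonneg)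
    ultimately show ?thesis by linarith
  qed
qed

lemma backward_cycle_keeps_bound:
  assumes om: "\<omega> \<in> cylinder (t + P) \<beta>'" and ib: "sep_bound N \<le> sepB \<omega> t"
    and pat: "\<And>i. i < P \<Longrightarrow> \<beta>' (- int (t + i) - 1) = (if slot N x y k = Some i then 1 else 0)"
    and near: "Npad \<le> N \<Longrightarrow> circ_dist (B.X \<omega> \<phi>1 t) x \<le> \<epsilon> \<and> circ_dist (B.X \<omega> \<phi>2 t) y \<le> \<epsilon>"
    and k: "k \<le> T + K0" "circ_dist (x + real k * - b) (1/2) \<le> b/2"
  shows "sep_bound (Suc N) \<le> sepB \<omega> (t + P)"
proof (rule sep_bound_Suc_le[OF ib])
  show "0 \<le> sepB \<omega> t" by (simp add: sepB_def circ_dist_nonneg)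
  have none: "(1 - 2*\<delta>) ^ P * sepB \<omega> t \<le> sepB \<omega> (t + P)" if "slot N x y k = None"
    using B.cycle_without_one[OF om] pat that by (simp add: sepB_def)
  show "N < Npad \<Longrightarrow> (1 - 2*\<delta>) ^ P * sepB \<omega> t \<le> sepB \<omega> (t + P)" by (rule none) (simp add: slot_def)
  assume late: "Npad \<le> N"
  note near = near[OF late, THEN conjunct1] near[OF late, THEN conjunct2]
  show "(s1 - 2*\<epsilon> \<le> sepB \<omega> t \<and> (1 - 2*\<delta>) ^ P * sepB \<omega> t \<le> sepB \<omega> (t + P)) \<or> rate * sepB \<omega> t \<le> sepB \<omega> (t + P)"
  proof (cases "circ_dist x y < s1")
    case False
    have "circ_dist x (B.X \<omega> \<phi>1 t) \<le> \<epsilon>" "circ_dist y (B.X \<omega> \<phi>2 t) \<le> \<epsilon>"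
      using near by (simp_all add: circ_dist_commute)
    then have "circ_dist x y \<le> sepB \<omega> t + \<epsilon> + \<epsilon>" unfolding sepB_def by (rule circ_dist_perturb)
    then show ?thesis using False none by (simp add: slot_def)
  next
    case True
    then have sl: "slot N x y k = Some k" using late by (simp add: slot_def)
    have kP: "k < P" using period_facts(3)[OF k(1)] by simp
    have sy: "\<beta>' (- int (t + i) - 1) = (if i = k then 1 else 0)" if "i < P" for i
      using pat[OF that] sl by auto
    have S: "circ_dist (B.X \<omega> \<phi>1 t) (B.X \<omega> \<phi>2 t) \<le> s1 + 2*\<epsilon>"
      using circ_dist_perturb[OF near] True by linarith
    have lam0: "0 \<le> 1 / (1/a + \<delta>)" using ha del by simp
    have "1 / (1/a + \<delta>) * (1 - 2*\<delta>) ^ (P - 1) * sepB \<omega> t \<le> sepB \<omega> (t + P)"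
      unfolding sepB_def by (rule B.cycle_with_one[OF om kP sy near(1) k(2) S cycle_budget[OF k(1)] lam0])
    moreover have "rate * sepB \<omega> t \<le> 1 / (1/a + \<delta>) * (1 - 2*\<delta>) ^ (P - 1) * sepB \<omega> t"
      by (rule rate_le[OF lamc(3)]) (simp add: sepB_def circ_dist_nonneg)
    ultimately show ?thesis by linarith
  qed
qed

lemma separated_0: "separated 0 (\<lambda>_. None) (\<lambda>_. None)"
proof -
  have "sep_bound 0 \<le> initial_sep" by (simp add: sep_bound_def)
  moreover have "initial_sep \<le> sepF \<omega> n \<and> initial_sep \<le> sepB \<omega> n" if "\<omega> \<in> Sigma2" for \<omega>
    using F.orbit_dist_co_lipschitz[OF that, of \<phi>1 \<phi>2 n] B.orbit_dist_co_lipschitz[OF that, of \<phi>1 \<phi>2 n] GG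
    by (simp add: initial_sep_def sepF_def sepB_def field_simps)
  ultimately show ?thesis by (force simp: separated_def cylinder_def)
qed

lemma separated_Suc:
  assumes IH: "separated N pf pb"
  shows "\<exists>pf' pb'. separated (Suc N) pf' pb'"
proof -
  define t where "t = n + N * P"
  define \<beta> where "\<beta> = padded_word w n P pf pb"
  have \<beta>_cyl: "\<beta> \<in> cylinder t \<beta>" by (simp add: \<beta>_def cylinder_self padded_word_Sigma2[OF word01])
  define xF where "xF = F.X \<beta> \<phi>1 t"
  define yF where "yF = F.X \<beta> \<phi>2 t"
  define xB where "xB = B.X \<beta> \<phi>1 t"
  define yB where "yB = B.X \<beta> \<phi>2 t"
  obtain kF where kF: "T \<le> kF" "kF \<le> T + K0" "circ_dist (xF + real kF * b) 0 \<le> b/2"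
    using rotation_steps_to_target[OF bpos, of b T xF 0] K0 by auto
  obtain kB where kB: "T \<le> kB" "kB \<le> T + K0" "circ_dist (xB + real kB * - b) (1/2) \<le> b/2"
    using rotation_steps_to_target[OF bpos, of "- b" T xB "1/2"] K0 by auto
  define pf' where "pf' = pf(N := slot N xF yF kF)"
  define pb' where "pb' = pb(N := slot N xB yB kB)"
  define \<beta>' where "\<beta>' = padded_word w n P pf' pb'"
  have "\<forall>i. - int t \<le> i \<and> i < int t \<longrightarrow> \<beta>' i = \<beta> i"
    using padded_word_agree[of N pf' pf pb' pb] period_facts(1) by (simp add: \<beta>'_def \<beta>_def t_def pf'_def pb'_def)
  then have cyl: "cylinder (t + P) \<beta>' \<subseteq> cylinder t \<beta>" by (rule cylinder_mono) simp
  have width: "circ_dist (F.X \<omega> x t) (F.X \<beta> x t) \<le> \<epsilon> \<and> circ_dist (B.X \<omega> x t) (B.X \<beta> x t) \<le> \<epsilon>"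
    if "Npad \<le> N" "\<omega> \<in> cylinder t \<beta>" for \<omega> x
    using orbit_width_le_eps[OF padding[OF that(1)]] that(2) \<beta>_cyl by (simp add: t_def \<beta>_def)
  have "sep_bound (Suc N) \<le> sepF \<omega> (t + P) \<and> sep_bound (Suc N) \<le> sepB \<omega> (t + P)" if om: "\<omega> \<in> cylinder (t + P) \<beta>'" for \<omega>
  proof -
    have "\<omega> \<in> cylinder t \<beta>" using om cyl by blast
    then have ib: "sep_bound N \<le> sepF \<omega> t" "sep_bound N \<le> sepB \<omega> t"
      and near: "Npad \<le> N \<Longrightarrow> circ_dist (F.X \<omega> x t) (F.X \<beta> x t) \<le> \<epsilon> \<and> circ_dist (B.X \<omega> x t) (B.X \<beta> x t) \<le> \<epsilon>" for x
      using IH width by (auto simp: separated_def t_def \<beta>_def)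
    show ?thesis
    proof
      show "sep_bound (Suc N) \<le> sepF \<omega> (t + P)"
        by (rule forward_cycle_keeps_bound[OF om ib(1) _ _ kF(2,3)])
          (use near period_facts(1) padded_word_fwd in \<open>auto simp: \<beta>'_def t_def pf'_def xF_def yF_def\<close>)
      show "sep_bound (Suc N) \<le> sepB \<omega> (t + P)"
        by (rule backward_cycle_keeps_bound[OF om ib(2) _ _ kB(2,3)])
          (use near period_facts(1) padded_word_bwd in \<open>auto simp: \<beta>'_def t_def pb'_def xB_def yB_def\<close>)
    qed
  qed
  moreover have "\<forall>j<Suc N. admissible_slot T P (pf' j) \<and> admissible_slot T P (pb' j)"
    using IH kF kB period_facts(3) by (auto simp: separated_def pf'_def pb'_def slot_def admissible_slot_def less_Suc_eq)
  ultimately have "separated (Suc N) pf' pb'"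
    by (simp add: separated_def t_def \<beta>'_def algebra_simps)
  then show ?thesis by blast
qed

lemma exists_separated: "\<exists>pf pb. separated N pf pb"
  by (induction N) (use separated_0 separated_Suc in blast)+

lemma sep_bound_reaches_target: "\<exists>N. Npad < N \<and> sep_bound N = target"
proof -
  define s0 where "s0 = initial_sep * (1 - 2*\<delta>) ^ (P * Npad)"
  have s0: "0 < s0" using circ_dist_pos[OF distinct] GG del by (simp add: s0_def initial_sep_def)
  obtain k where k: "target / s0 < rate ^ k" using real_arch_pow[OF rate_gt_1] by blast
  have "target \<le> s0 * rate ^ k" using k s0 by (simp add: field_simps)
  also have "\<dots> \<le> s0 * rate ^ Suc k" using rate_gt_1 s0 by (intro mult_left_mono power_increasing) auto
  finally show ?thesis by (intro exI[of _ "Npad + Suc k"]) (simp add: sep_bound_def s0_def)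
qed

lemma set_circ_dist_orbits:
  assumes sep: "\<And>\<omega>. \<omega> \<in> cylinder m \<beta> \<Longrightarrow> target \<le> circ_dist (X \<omega> \<phi>1) (X \<omega> \<phi>2)"
    and width: "\<And>\<omega> \<omega>'. \<omega> \<in> cylinder m \<beta> \<Longrightarrow> \<omega>' \<in> cylinder m \<beta> \<Longrightarrow> circ_dist (X \<omega> \<phi>2) (X \<omega>' \<phi>2) \<le> \<epsilon>"
    and "\<beta> \<in> Sigma2"
  shows "2 * b \<le> set_circ_dist {X \<omega> \<phi>1 | \<omega>. \<omega> \<in> cylinder m \<beta>} {X \<omega> \<phi>2 | \<omega>. \<omega> \<in> cylinder m \<beta>}"
proof (rule set_circ_dist_ge)
  show "cylinder m \<beta> \<noteq> {}" using cylinder_self[OF \<open>\<beta> \<in> Sigma2\<close>] by blast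
  fix \<omega> \<omega>' assume om: "\<omega> \<in> cylinder m \<beta>" "\<omega>' \<in> cylinder m \<beta>"
  have "circ_dist (X \<omega> \<phi>1) (X \<omega> \<phi>2) \<le> circ_dist (X \<omega> \<phi>1) (X \<omega>' \<phi>2) + 0 + \<epsilon>"
    by (rule circ_dist_perturb) (simp_all add: circ_dist_self width[OF om])
  then show "2 * b \<le> circ_dist (X \<omega> \<phi>1) (X \<omega>' \<phi>2)" using sep[OF om(1)] target_ge by linarith
qed

lemma exists_separating_word:
  "\<exists>m \<beta>. n \<le> m
     \<and> (\<forall>i. - int m \<le> i \<and> i < int m \<longrightarrow> \<beta> i \<le> 1)
     \<and> (\<forall>i. - int n \<le> i \<and> i < int n \<longrightarrow> \<beta> i = w i)
     \<and> zero_blocks_ge T \<beta> (- int m) (- int n)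
     \<and> zero_blocks_ge T \<beta> (int n) (int m)
     \<and> set_circ_dist (Vplus f m \<beta> \<phi>1) (Vplus f m \<beta> \<phi>2) \<ge> 2 * b
     \<and> set_circ_dist (Vminus f m \<beta> \<phi>1) (Vminus f m \<beta> \<phi>2) \<ge> 2 * b"
proof -
  obtain N where N: "Npad < N" "sep_bound N = target" using sep_bound_reaches_target by blast
  obtain pf pb where sepd: "separated N pf pb" using exists_separated by blast
  define m where "m = n + N * P"
  define \<beta> where "\<beta> = padded_word w n P pf pb"
  have \<beta>: "\<beta> \<in> Sigma2" by (simp add: \<beta>_def padded_word_Sigma2[OF word01])
  have sep: "target \<le> sepF \<omega> m" "target \<le> sepB \<omega> m" if "\<omega> \<in> cylinder m \<beta>" for \<omega>
    using sepd that N(2) by (auto simp: separated_def m_def \<beta>_def)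
  have width: "circ_dist (F.X \<omega> x m) (F.X \<omega>' x m) \<le> \<epsilon>" "circ_dist (B.X \<omega> x m) (B.X \<omega>' x m) \<le> \<epsilon>"
    if "\<omega> \<in> cylinder m \<beta>" "\<omega>' \<in> cylinder m \<beta>" for \<omega> \<omega>' x
    using orbit_width_le_eps[OF padding[of N]] N(1) that by (auto simp: m_def \<beta>_def)
  have "2 * b \<le> set_circ_dist (Vplus f m \<beta> \<phi>1) (Vplus f m \<beta> \<phi>2)"
    unfolding Vplus_def fwd_eq_orbit
    by (rule set_circ_dist_orbits[OF _ _ \<beta>]) (use sep width in \<open>auto simp: sepF_def\<close>)
  moreover have "2 * b \<le> set_circ_dist (Vminus f m \<beta> \<phi>1) (Vminus f m \<beta> \<phi>2)"
    unfolding Vminus_def bwd_eq_orbit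
    by (rule set_circ_dist_orbits[OF _ _ \<beta>]) (use sep width in \<open>auto simp: sepB_def\<close>)
  moreover have "zero_blocks_ge T \<beta> (int n) (int m)"
    unfolding \<beta>_def m_def by (rule zero_blocks_fwd) (use sepd N(1) period_facts in \<open>auto simp: separated_def\<close>)
  moreover have "zero_blocks_ge T \<beta> (- int m) (- int n)"
    unfolding \<beta>_def m_def by (rule zero_blocks_bwd) (use sepd N(1) period_facts T0 in \<open>auto simp: separated_def\<close>)
  ultimately show ?thesis using \<beta> by (intro exI[of _ m] exI[of _ \<beta>]) (auto simp: m_def \<beta>_def padded_word_centre Sigma2_def)
qed

end

lemma (in construction) exists_separating_word:
  assumes "\<forall>i. - int n \<le> i \<and> i < int n \<longrightarrow> w i \<le> 1" and "frac \<phi>1 \<noteq> frac \<phi>2"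
  shows "\<exists>m \<beta>. n \<le> m
           \<and> (\<forall>i. - int m \<le> i \<and> i < int m \<longrightarrow> \<beta> i \<le> 1)
           \<and> (\<forall>i. - int n \<le> i \<and> i < int n \<longrightarrow> \<beta> i = w i)
           \<and> zero_blocks_ge T \<beta> (- int m) (- int n)
           \<and> zero_blocks_ge T \<beta> (int n) (int m)
           \<and> set_circ_dist (Vplus f m \<beta> \<phi>1) (Vplus f m \<beta> \<phi>2) \<ge> 2 * b
           \<and> set_circ_dist (Vminus f m \<beta> \<phi>1) (Vminus f m \<beta> \<phi>2) \<ge> 2 * b"
proof -
  obtain Npad where "\<And>N. Npad \<le> N \<Longrightarrow> G ^ n * real n * (C/\<mu>) * (1/r) ^ N \<le> \<epsilon>/3"
    using exists_padding_length by blast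
  then interpret separation b a C \<alpha> \<delta> mg Mg \<mu> G g1 f T P K0 I c r \<epsilon> s1 lamc n w \<phi>1 \<phi>2 Npad
    using assms by unfold_locales auto
  show ?thesis by (rule exists_separating_word)
qed

section \<open>Choice of the perturbation size\<close>

lemma mild_skew_alpha_pos:
  assumes ha: "a > 1" and g: "circle_diffeo g1" and l0: "\<forall>x. \<bar>x\<bar> < 1/8 \<longrightarrow> g1 x = a * x"
    and lh: "\<forall>x. \<bar>x - 1/2\<bar> < 1/8 \<longrightarrow> g1 x = 1/2 + (x - 1/2) / a"
    and ms: "mild_skew b g1 \<delta> C \<alpha> f" and del: "\<delta> < a - 1"
  shows "0 < \<alpha>"
proof (rule ccontr)
  assume "\<not> 0 < \<alpha>"
  define \<omega>1 :: "int \<Rightarrow> nat" where "\<omega>1 = (\<lambda>_. 1)"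
  have o1: "\<omega>1 \<in> Sigma2" by (simp add: \<omega>1_def Sigma2_def)
  obtain mg Mg where "0 < mg" "\<And>x. mg \<le> deriv g1 x \<and> deriv g1 x \<le> Mg"
    using circle_diffeo_deriv_bounds[OF g] by blast
  then have gb: "\<And>x. 0 \<le> deriv g1 x \<and> deriv g1 x \<le> Mg" by (meson less_eq_real_def order_trans)
  have "\<bar>deriv (f \<omega>1) 0 - deriv g1 0\<bar> < \<delta>"
    using mild_skew_fibre_close(3)[OF ms o1 g gb, of 0] by (simp add: \<omega>1_def)
  then have d1: "a - \<delta> < deriv (f \<omega>1) 0" using g1_deriv_near_0[OF l0, of 0] by (simp add: abs_less_iff)
  obtain L where L: "L < 2 powr \<alpha>" "\<bar>deriv (f \<omega>1) 0\<bar> \<le> L" using ms o1 unfolding mild_skew_def by blast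
  have "2 powr \<alpha> \<le> 2 powr 0" using \<open>\<not> 0 < \<alpha>\<close> by (intro powr_mono) auto
  then show False using L d1 del by (simp add: abs_le_iff)
qed

lemma mild_skew_C_nonneg:
  assumes ms: "mild_skew b g1 \<delta> C \<alpha> f"
  shows "0 \<le> C"
proof (rule ccontr)
  assume "\<not> 0 \<le> C"
  define \<omega>a :: "int \<Rightarrow> nat" where "\<omega>a = (\<lambda>_. 0)"
  define \<omega>b :: "int \<Rightarrow> nat" where "\<omega>b = (\<lambda>_. 1)"
  have oo: "\<omega>a \<in> Sigma2" "\<omega>b \<in> Sigma2" by (auto simp: \<omega>a_def \<omega>b_def Sigma2_def)
  have "\<omega>a \<noteq> \<omega>b" by (auto simp: \<omega>a_def \<omega>b_def fun_eq_iff)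
  then have "0 < dSigma \<omega>a \<omega>b powr \<alpha>" by (simp add: dSigma_def)
  moreover have "circ_dist (f \<omega>a 0) (f \<omega>b 0) \<le> C * dSigma \<omega>a \<omega>b powr \<alpha>"
    using ms oo unfolding mild_skew_def by blast
  ultimately show False using \<open>\<not> 0 \<le> C\<close> circ_dist_nonneg[of "f \<omega>a 0" "f \<omega>b 0"]
    by (smt (verit) mult_neg_pos)
qed

lemma eventually_construction_bounds:
  fixes a b \<mu> c r \<epsilon> s1 lamc :: real and I P K :: nat
  assumes ha: "1 < a" "a < 19/5" and hb: "0 < b" "b < 1/100" and mu: "0 < \<mu>" and c: "1 < c"
    and eps: "\<epsilon> = 1/10000" and s1: "s1 = 2*b + 1/1000" and lamc: "lamc = (1+a)/2"
  shows "\<forall>\<^sub>F \<delta> in at_right (0::real). \<delta> < \<mu> \<and> \<delta> < 1/10 \<and> \<delta> < 12/100/a - 3/100 \<and> 1 + 2*\<delta> < c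
        \<and> real I * (r ^ I * (real P * (2/\<mu> * \<delta>))) < \<epsilon>/3
        \<and> lamc < a - \<delta> \<and> lamc < 1/(1/a + \<delta>) \<and> 1 < lamc * (1 - 2*\<delta>) ^ P
        \<and> b/2 + \<epsilon> + real K * \<delta> + (1+2*\<delta>) ^ K * (s1 + 2*\<epsilon>) < 3/100
        \<and> 2*b < (1-2*\<delta>) ^ P * (s1 - 2*\<epsilon>) - \<epsilon>"
proof (intro eventually_conj)
  have id: "((\<lambda>x::real. x) \<longlongrightarrow> 0) (at_right 0)" by (rule tendsto_ident_at)
  note below = order_tendstoD(2) and above = order_tendstoD(1)
  show "\<forall>\<^sub>F \<delta> in at_right (0::real). \<delta> < \<mu>" by (rule below[OF id mu])
  show "\<forall>\<^sub>F \<delta> in at_right (0::real). \<delta> < 1/10" by (rule below[OF id]) simp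
  have "0 < 12/100/a - 3/100" using ha by (simp add: field_simps)
  then show "\<forall>\<^sub>F \<delta> in at_right (0::real). \<delta> < 12/100/a - 3/100" by (rule below[OF id])
  have "((\<lambda>\<delta>. 1 + 2*\<delta>) \<longlongrightarrow> 1 + 2*0) (at_right (0::real))" by (intro tendsto_intros id)
  then show "\<forall>\<^sub>F \<delta> in at_right (0::real). 1 + 2*\<delta> < c" by (rule below) (use c in auto)
  have "((\<lambda>\<delta>. real I * (r ^ I * (real P * (2/\<mu> * \<delta>)))) \<longlongrightarrow> real I * (r ^ I * (real P * (2/\<mu> * 0))))
      (at_right (0::real))" by (intro tendsto_intros id)
  then show "\<forall>\<^sub>F \<delta> in at_right (0::real). real I * (r ^ I * (real P * (2/\<mu> * \<delta>))) < \<epsilon>/3"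
    by (rule below) (simp add: eps)
  have "((\<lambda>\<delta>. a - \<delta>) \<longlongrightarrow> a - 0) (at_right (0::real))" by (intro tendsto_intros id)
  then show "\<forall>\<^sub>F \<delta> in at_right (0::real). lamc < a - \<delta>" by (rule above) (use ha in \<open>auto simp: lamc\<close>)
  have "((\<lambda>\<delta>. 1/(1/a + \<delta>)) \<longlongrightarrow> 1/(1/a + 0)) (at_right (0::real))" using ha by (intro tendsto_intros id) auto
  then show "\<forall>\<^sub>F \<delta> in at_right (0::real). lamc < 1/(1/a + \<delta>)" by (rule above) (use ha in \<open>auto simp: lamc\<close>)
  have "((\<lambda>\<delta>. lamc * (1 - 2*\<delta>) ^ P) \<longlongrightarrow> lamc * (1 - 2*0) ^ P) (at_right (0::real))" by (intro tendsto_intros id)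
  then show "\<forall>\<^sub>F \<delta> in at_right (0::real). 1 < lamc * (1 - 2*\<delta>) ^ P" by (rule above) (use ha in \<open>auto simp: lamc\<close>)
  have "((\<lambda>\<delta>. b/2 + \<epsilon> + real K * \<delta> + (1+2*\<delta>) ^ K * (s1 + 2*\<epsilon>)) \<longlongrightarrow>
       b/2 + \<epsilon> + real K * 0 + (1+2*0) ^ K * (s1 + 2*\<epsilon>)) (at_right (0::real))" by (intro tendsto_intros id)
  then show "\<forall>\<^sub>F \<delta> in at_right (0::real). b/2 + \<epsilon> + real K * \<delta> + (1+2*\<delta>) ^ K * (s1 + 2*\<epsilon>) < 3/100"
    by (rule below) (use hb in \<open>auto simp: eps s1\<close>)
  have "((\<lambda>\<delta>. (1-2*\<delta>) ^ P * (s1 - 2*\<epsilon>) - \<epsilon>) \<longlongrightarrow> (1-2*0) ^ P * (s1 - 2*\<epsilon>) - \<epsilon>) (at_right (0::real))"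
    by (intro tendsto_intros id)
  then show "\<forall>\<^sub>F \<delta> in at_right (0::real). 2*b < (1-2*\<delta>) ^ P * (s1 - 2*\<epsilon>) - \<epsilon>"
    by (rule above) (auto simp: eps s1)
qed

lemma exists_construction:
  fixes b a C \<alpha> :: real and g1 :: "real \<Rightarrow> real" and T :: nat
  assumes hb: "0 < b" "b < 1/100" and ha: "a > 1" and g: "circle_diffeo g1"
    and l0: "\<forall>x. \<bar>x\<bar> < 1/8 \<longrightarrow> g1 x = a * x"
    and lh: "\<forall>x. \<bar>x - 1/2\<bar> < 1/8 \<longrightarrow> g1 x = 1/2 + (x - 1/2) / a"
    and T0: "T > 0"
  shows "\<exists>\<delta>0>0. \<forall>\<delta> f. 0 < \<delta> \<and> \<delta> < \<delta>0 \<and> mild_skew b g1 \<delta> C \<alpha> f \<longrightarrow>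
     (\<exists>mg Mg \<mu> G P K0 I c r \<epsilon> s1 lamc. construction b a C \<alpha> \<delta> mg Mg \<mu> G g1 f T P K0 I c r \<epsilon> s1 lamc)"
proof (cases "0 < \<alpha> \<and> 0 \<le> C")
  case False
  then have "\<not> mild_skew b g1 \<delta> C \<alpha> f" if "\<delta> < a - 1" for \<delta> f
    using mild_skew_alpha_pos[OF ha g l0 lh _ that] mild_skew_C_nonneg by blast
  then show ?thesis using ha by (intro exI[of _ "a - 1"]) auto
next
  case True
  then have a0: "0 < \<alpha>" and C0: "0 \<le> C" by auto
  obtain mg Mg where mgM: "0 < mg" "\<And>x. mg \<le> deriv g1 x \<and> deriv g1 x \<le> Mg"
    using circle_diffeo_deriv_bounds[OF g] by blast
  define \<mu> where "\<mu> = min 1 mg / 2"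
  have mu0: "0 < \<mu>" using mgM(1) by (simp add: \<mu>_def)
  define G where "G = max (Mg + 1) (max (1/\<mu>) 2)"
  have GG: "Mg + 1 \<le> G" "1 / \<mu> \<le> G" "2 \<le> G" by (auto simp: G_def)
  define \<epsilon> :: real where "\<epsilon> = 1/10000"
  define s1 where "s1 = 2*b + 1/1000"
  define K0 where "K0 = nat \<lceil>1/b\<rceil>"
  define lamc where "lamc = (1 + a)/2"
  define c where "c = 2 powr (\<alpha>/4)"
  have c1: "1 < c" using a0 by (simp add: c_def)
  obtain P where PT: "2*T + K0 + 1 \<le> P" and Gc: "G \<le> c ^ P"
    using exists_power_ge[OF c1, where G = G and m = "2*T + K0 + 1"] by blast
  define r where "r = (c ^ P)\<^sup>2"
  obtain I where tail: "real P * (C/\<mu>) * r\<^sup>2 * (1/2) ^ I \<le> \<epsilon>/3"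
    using eventually_mult_power_le[of "real P * (C/\<mu>) * r\<^sup>2" "\<epsilon>/3" "1/2"] mu0 C0 \<epsilon>_def by auto
  obtain \<delta>0 where d0: "\<delta>0 > 0" and small: "\<And>\<delta>. 0 < \<delta> \<Longrightarrow> \<delta> < \<delta>0 \<Longrightarrow> \<delta> < \<mu> \<and> \<delta> < 1/10
        \<and> \<delta> < 12/100/a - 3/100 \<and> 1 + 2*\<delta> < c \<and> real I * (r ^ I * (real P * (2/\<mu> * \<delta>))) < \<epsilon>/3
        \<and> lamc < a - \<delta> \<and> lamc < 1/(1/a + \<delta>) \<and> 1 < lamc * (1 - 2*\<delta>) ^ P
        \<and> b/2 + \<epsilon> + real (T+K0) * \<delta> + (1+2*\<delta>) ^ (T+K0) * (s1 + 2*\<epsilon>) < 3/100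
        \<and> 2*b < (1-2*\<delta>) ^ P * (s1 - 2*\<epsilon>) - \<epsilon>"
    using eventually_construction_bounds[OF ha g1_slope_bound[OF ha g l0 lh] hb mu0 c1 \<epsilon>_def s1_def lamc_def,
        of I r P "T + K0"]
    unfolding eventually_at_right_field by auto
  show ?thesis
  proof (rule exI[of _ \<delta>0], intro conjI allI impI d0)
    fix \<delta> f assume h: "0 < \<delta> \<and> \<delta> < \<delta>0 \<and> mild_skew b g1 \<delta> C \<alpha> f"
    then have D: "\<delta> < \<mu>" "\<delta> < 1/10" "\<delta> < 12/100/a - 3/100" "1 + 2*\<delta> < c"
        "real I * (r ^ I * (real P * (2/\<mu> * \<delta>))) < \<epsilon>/3"
        "lamc < a - \<delta>" "lamc < 1/(1/a + \<delta>)" "1 < lamc * (1 - 2*\<delta>) ^ P"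
        "b/2 + \<epsilon> + real (T+K0) * \<delta> + (1+2*\<delta>) ^ (T+K0) * (s1 + 2*\<epsilon>) < 3/100"
        "2*b < (1-2*\<delta>) ^ P * (s1 - 2*\<epsilon>) - \<epsilon>" using small by blast+
    have "construction b a C \<alpha> \<delta> mg Mg \<mu> G g1 f T P K0 I c r \<epsilon> s1 lamc"
    proof unfold_locales
      show "mild_skew b g1 \<delta> C \<alpha> f" "0 < \<delta>" using h by auto
      show "\<delta> \<le> \<mu>" "\<delta> \<le> 1/10" "\<delta> < 12/100/a - 3/100" "1 + 2*\<delta> \<le> c"
        "real I * (r ^ I * (real P * (2/\<mu> * \<delta>))) \<le> \<epsilon>/3" "lamc \<le> a - \<delta>" "lamc \<le> 1/(1/a + \<delta>)"
        "1 < lamc * (1 - 2*\<delta>) ^ P"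
        "b/2 + \<epsilon> + real (T+K0) * \<delta> + (1+2*\<delta>) ^ (T+K0) * (s1 + 2*\<epsilon>) < 3/100"
        "2*b \<le> (1-2*\<delta>) ^ P * (s1 - 2*\<epsilon>) - \<epsilon>" using D by auto
    qed (fact ha g l0 lh mgM \<mu>_def GG a0 C0 T0 hb K0_def PT c_def Gc r_def \<epsilon>_def s1_def lamc_def tail)+
    then show "\<exists>mg Mg \<mu> G P K0 I c r \<epsilon> s1 lamc. construction b a C \<alpha> \<delta> mg Mg \<mu> G g1 f T P K0 I c r \<epsilon> s1 lamc"
      by blast
  qed
qed

theorem lemma8:
  fixes b a C \<alpha> :: real and g1 :: "real \<Rightarrow> real" and T :: nat
  assumes "0 < b" and "b < 1/100"
    and "a > 1"
    and "circle_diffeo g1"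
    and "{frac x | x. nonwandering g1 x} = {0, 1/2}"
    and "\<forall>x. \<bar>x\<bar> < 1/8 \<longrightarrow> g1 x = a * x"
    and "\<forall>x. \<bar>x - 1/2\<bar> < 1/8 \<longrightarrow> g1 x = 1/2 + (x - 1/2) / a"
    and "T > 0"
  shows "\<exists>\<delta>0>0. \<forall>\<delta> f. 0 < \<delta> \<and> \<delta> < \<delta>0 \<and> mild_skew b g1 \<delta> C \<alpha> f \<longrightarrow>
     (\<forall>n w \<phi>1 \<phi>2. (\<forall>i. - int n \<le> i \<and> i < int n \<longrightarrow> w i \<le> 1) \<and> frac \<phi>1 \<noteq> frac \<phi>2 \<longrightarrow>
        (\<exists>m \<beta>. n \<le> m
           \<and> (\<forall>i. - int m \<le> i \<and> i < int m \<longrightarrow> \<beta> i \<le> 1)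
           \<and> (\<forall>i. - int n \<le> i \<and> i < int n \<longrightarrow> \<beta> i = w i)
           \<and> zero_blocks_ge T \<beta> (- int m) (- int n)
           \<and> zero_blocks_ge T \<beta> (int n) (int m)
           \<and> set_circ_dist (Vplus f m \<beta> \<phi>1) (Vplus f m \<beta> \<phi>2) \<ge> 2 * b
           \<and> set_circ_dist (Vminus f m \<beta> \<phi>1) (Vminus f m \<beta> \<phi>2) \<ge> 2 * b))"
proof -
  obtain \<delta>0 where "\<delta>0 > 0" and constr: "\<And>\<delta> f. 0 < \<delta> \<and> \<delta> < \<delta>0 \<and> mild_skew b g1 \<delta> C \<alpha> f \<Longrightarrow>
      \<exists>mg Mg \<mu> G P K0 I c r \<epsilon> s1 lamc. construction b a C \<alpha> \<delta> mg Mg \<mu> G g1 f T P K0 I c r \<epsilon> s1 lamc"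
    using exists_construction[OF assms(1-4,6-8), of C \<alpha>] by blast
  show ?thesis
  proof (intro exI[of _ \<delta>0] conjI allI impI \<open>\<delta>0 > 0\<close>)
    fix \<delta> :: real and f :: "(int \<Rightarrow> nat) \<Rightarrow> real \<Rightarrow> real" and n :: nat and w :: "int \<Rightarrow> nat"
      and \<phi>1 \<phi>2 :: real
    assume h: "0 < \<delta> \<and> \<delta> < \<delta>0 \<and> mild_skew b g1 \<delta> C \<alpha> f"
      and word: "(\<forall>i. - int n \<le> i \<and> i < int n \<longrightarrow> w i \<le> 1) \<and> frac \<phi>1 \<noteq> frac \<phi>2"
    obtain mg Mg \<mu> G P K0 I c r \<epsilon> s1 lamc
      where "construction b a C \<alpha> \<delta> mg Mg \<mu> G g1 f T P K0 I c r \<epsilon> s1 lamc" using constr[OF h] by blast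
    then show "\<exists>m \<beta>. n \<le> m
           \<and> (\<forall>i. - int m \<le> i \<and> i < int m \<longrightarrow> \<beta> i \<le> 1)
           \<and> (\<forall>i. - int n \<le> i \<and> i < int n \<longrightarrow> \<beta> i = w i)
           \<and> zero_blocks_ge T \<beta> (- int m) (- int n)
           \<and> zero_blocks_ge T \<beta> (int n) (int m)
           \<and> set_circ_dist (Vplus f m \<beta> \<phi>1) (Vplus f m \<beta> \<phi>2) \<ge> 2 * b
           \<and> set_circ_dist (Vminus f m \<beta> \<phi>1) (Vminus f m \<beta> \<phi>2) \<ge> 2 * b"
      using word by (intro construction.exists_separating_word) auto
  qed
qed

end
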